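(* Let $S\subset\mathbb R^2$ be a finite set of $n>4$ points, none of which lies at the center $O$ of SED$(S)$. If $S$ is Pre-regular, then $S$ is not a Half-disk set.
   Context: SED$(S)$ is the smallest closed disk containing $S$, SEC$(S)$ its boundary circle, and $O$ its center. $S$ is \emph{Pre-regular} if there is a regular $n$-gon $P$ (the supporting polygon) such that for every pair of adjacent edges of $P$, one of the two edges contains exactly two points of $S$ (possibly at its endpoints) and the relative interior of the other edge contains no point of $S$. $S$ is a \emph{Half-disk} set if there is a line $\ell$ through $O$ such that exactly one of the two open half-planes bounded by $\ell$ contains no point of $S$. *)

theory Defs
  imports "HOL-Analysis.Analysis"
begin

definition is_SED :: "complex set \<Rightarrow> complex \<Rightarrow> real \<Rightarrow> bool" where
  "is_SED S z0 r \<longleftrightarrow> S \<subseteq> cball z0 r \<and> (\<forall>c' r'. S \<subseteq> cball c' r' \<longrightarrow> r \<le> r')"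

definition reg_vertex :: "nat \<Rightarrow> complex \<Rightarrow> real \<Rightarrow> real \<Rightarrow> nat \<Rightarrow> complex" where
  "reg_vertex m c r th k = c + of_real r * cis (th + 2 * pi * real k / real m)"

definition reg_edge :: "nat \<Rightarrow> complex \<Rightarrow> real \<Rightarrow> real \<Rightarrow> nat \<Rightarrow> complex set" where
  "reg_edge m c r th k = closed_segment (reg_vertex m c r th k) (reg_vertex m c r th (Suc k))"

definition reg_edge_int :: "nat \<Rightarrow> complex \<Rightarrow> real \<Rightarrow> real \<Rightarrow> nat \<Rightarrow> complex set" where
  "reg_edge_int m c r th k = open_segment (reg_vertex m c r th k) (reg_vertex m c r th (Suc k))"

definition pre_regular :: "complex set \<Rightarrow> bool" where
  "pre_regular S \<longleftrightarrow> (let n = card S in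
     \<exists>c r th. r > 0 \<and>
       (\<forall>k < n. let e1 = k; e2 = Suc k mod n in
          (card (S \<inter> reg_edge n c r th e1) = 2 \<and> S \<inter> reg_edge_int n c r th e2 = {}) \<or>
          (card (S \<inter> reg_edge n c r th e2) = 2 \<and> S \<inter> reg_edge_int n c r th e1 = {})))"

definition half_disk :: "complex set \<Rightarrow> complex \<Rightarrow> bool" where
  "half_disk S z0 \<longleftrightarrow> (\<exists>u. u \<noteq> 0 \<and>
     ((S \<inter> {x. inner (x - z0) u > 0} = {}) \<noteq> (S \<inter> {x. inner (x - z0) u < 0} = {})))"

end

theory Submission
  imports Defs
begin

text \<open>Suppose S is both.  Since S lies in a closed
  half-plane through the centre z0 of its smallest enclosing disk, minimality of the disk forces two
  antipodal points of S on the boundary line of that half-plane.  A similarity therefore brings S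
  into a normal form: S lies in the closed lower half of the disk of radius 1/2 about 0 and contains
  -1/2 and 1/2.  Similarities preserve Pre-regularity.  In normal form, every point of S lies on the
  boundary of the supporting regular n-gon (a counting argument) and the polygon is convex, which
  pins down how edges can cross the real axis; if some vertex is above the axis, an edge direction
  would have to turn by less than pi from the upper right into the lower right quadrant, and if all
  vertices are weakly below, the edges next to the edge on the axis leave the disk.\<close>

text \<open>Planar cross product: cross x y is the signed area of the parallelogram spanned by x, y;
  it is positive iff y lies strictly to the left of the direction x.\<close>
definition cross :: "complex \<Rightarrow> complex \<Rightarrow> real" where "cross x y = Im (cnj x * y)"

lemma cross_add: "cross x (y + z) = cross x y + cross x z" by (simp add: cross_def algebra_simps)
lemma cross_diff: "cross x (y - z) = cross x y - cross x z" by (simp add: cross_def algebra_simps)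
lemma cross_scale: "cross x (of_real a * y) = a * cross x y" by (simp add: cross_def algebra_simps)
lemma cross_self: "cross x (of_real a * x) = 0"
  by (simp add: cross_def algebra_simps)
lemma cross_expand: "cross x y = Re x * Im y - Im x * Re y" by (simp add: cross_def)

lemma closed_segment_param: "x \<in> closed_segment a b \<longleftrightarrow> (\<exists>t. 0 \<le> t \<and> t \<le> 1 \<and> x = a + complex_of_real t * (b - a))"
  unfolding in_segment scaleR_conv_of_real by (auto simp: algebra_simps)

lemma open_segment_param: "x \<in> open_segment a b \<longleftrightarrow> a \<noteq> b \<and> (\<exists>t. 0 < t \<and> t < 1 \<and> x = a + complex_of_real t * (b - a))"
  unfolding in_segment scaleR_conv_of_real by (auto simp: algebra_simps)
lemma cross_segment_point: "cross v (a + complex_of_real t * (b - a) - w) = (1 - t) * cross v (a - w) + t * cross v (b - w)"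
proof -
  have "a + complex_of_real t * (b - a) - w = (a - w) + complex_of_real t * ((b - w) - (a - w))" by (simp add: algebra_simps)
  then have "cross v (a + complex_of_real t * (b - a) - w) = cross v (a - w) + t * (cross v (b - w) - cross v (a - w))"
    by (simp only: cross_add cross_diff cross_scale)
  then show ?thesis by (simp add: algebra_simps)
qed

text \<open>Trigonometric identity behind the area of a triangle inscribed in a circle.\<close>
lemma sin_double_sum: "sin (2*y) + sin (2*x) - sin (2*x + 2*y) = 4 * sin x * sin y * sin (x+y::real)"
proof -
  have px: "sin x ^ 2 + cos x ^ 2 = 1" and py: "sin y ^ 2 + cos y ^ 2 = 1" by simp_all
  have "sin (2*y) + sin (2*x) - sin (2*x + 2*y) - 4 * sin x * sin y * sin (x+y)
      = 2 * sin x * cos x * (1 - (sin y ^ 2 + cos y ^ 2)) + 2 * sin y * cos y * (1 - (sin x ^ 2 + cos x ^ 2))"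
  proof -
    have a1: "sin (2*x) = 2 * sin x * cos x" "sin (2*y) = 2 * sin y * cos y" by (rule sin_double)+
    have a2: "cos (2*x) = cos x ^ 2 - sin x ^ 2" "cos (2*y) = cos y ^ 2 - sin y ^ 2" by (rule cos_double)+
    have a3: "sin (2*x + 2*y) = sin (2*x) * cos (2*y) + cos (2*x) * sin (2*y)" by (rule sin_add)
    have a4: "sin (x+y) = sin x * cos y + cos x * sin y" by (rule sin_add)
    show ?thesis unfolding a3 a4 a1 a2 by algebra
  qed
  also have "\<dots> = 0" by (simp add: px py)
  finally show ?thesis by simp
qed

lemma cross_cos_sin: "(cos A - cos B)*(sin C - sin B) - (sin A - sin B)*(cos C - cos B) = sin (C - A) + sin (A - B) - sin (C - B::real)"
  unfolding sin_diff by algebra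

lemma rotate_upper_right:
  assumes th: "0 < \<theta>" "\<theta> < pi" and v: "Re v > 0" "Im v \<ge> 0"
    and w: "Re (cis \<theta> * v) > 0" "Im (cis \<theta> * v) \<le> 0"
  shows False
proof -
  have s: "sin \<theta> > 0" using th by (rule sin_gt_zero)
  have re: "Re (cis \<theta> * v) = cos \<theta> * Re v - sin \<theta> * Im v" and im: "Im (cis \<theta> * v) = sin \<theta> * Re v + cos \<theta> * Im v"
    by simp_all
  have "sin \<theta> * Re v > 0" using s v by simp
  then have "cos \<theta> * Im v < 0" using w(2) im by linarith
  then have c: "cos \<theta> < 0" using v(2) by (auto simp: mult_less_0_iff)
  have "cos \<theta> * Re v < 0" using c v(1) by (simp add: mult_neg_pos)
  moreover have "sin \<theta> * Im v \<ge> 0" using s v by simp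
  ultimately show False using w(1) re by linarith
qed

text \<open>Thales: a chord of the disk of radius 1/2 leaving the point -1/2 (resp. 1/2) of the horizontal
  diameter must point to the right (resp. arrive from the left).\<close>
lemma thales_left:
  assumes "cmod (-(1/2) + complex_of_real \<tau> * v) \<le> 1/2" "\<tau> > 0" "v \<noteq> 0"
  shows "Re v > 0"
proof -
  have "(cmod (-(1/2) + complex_of_real \<tau> * v))^2 \<le> (1/2)^2"
    using assms(1) by (intro power_mono) simp_all
  moreover have "(cmod (-(1/2) + complex_of_real \<tau> * v))^2 = (-(1/2) + \<tau> * Re v)^2 + (\<tau> * Im v)^2"
    by (simp only: cmod_power2) simp
  ultimately have "(-(1/2) + \<tau> * Re v)^2 + (\<tau> * Im v)^2 \<le> 1/4" by (simp add: power2_eq_square)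
  then have "\<tau> * (\<tau> * ((Re v)^2 + (Im v)^2)) \<le> \<tau> * Re v" by (simp add: power2_eq_square algebra_simps)
  moreover have "(Re v)^2 + (Im v)^2 > 0" using assms(3) by (simp add: complex_eq_iff sum_power2_gt_zero_iff)
  ultimately have "\<tau> * Re v > 0" using assms(2) by (smt (verit) mult_pos_pos)
  then show ?thesis using assms(2) by (simp add: zero_less_mult_iff)
qed

lemma thales_right:
  assumes "cmod (1/2 - complex_of_real \<tau> * v) \<le> 1/2" "\<tau> > 0" "v \<noteq> 0"
  shows "Re v > 0"
proof -
  have "cmod (-(1/2) + complex_of_real \<tau> * v) = cmod (1/2 - complex_of_real \<tau> * v)"
    by (metis minus_diff_eq norm_minus_cancel uminus_add_conv_diff)
  then show ?thesis using thales_left assms by metis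
qed

text \<open>If all of S lies in a closed half-plane through the centre z0, then
  the boundary line of that half-plane must contain an antipodal pair a, 2 z0 - a of points of S
  on the circle: otherwise the centre could be pushed slightly into the half-plane (and along the
  line, away from the only boundary point on it) so that all points become strictly closer than r.\<close>

lemma perp_form:
  fixes x u :: complex
  assumes "inner x u = 0" "u \<noteq> 0"
  shows "x = complex_of_real ((Im x * Re u - Re x * Im u) / (cmod u)^2) * (\<i> * u)"
proof -
  have h: "Re x * Re u + Im x * Im u = 0" using assms(1) by (simp add: inner_complex_def)
  have n: "(Re u)^2 + (Im u)^2 \<noteq> 0" using assms(2) by (simp add: complex_eq_iff sum_power2_eq_zero_iff)
  show ?thesis unfolding complex_eq_iff cmod_power2 using n h
    by (simp add: field_simps power2_eq_square) algebra
qed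

lemma perp_same_norm:
  fixes x y u :: complex
  assumes "inner x u = 0" "inner y u = 0" "u \<noteq> 0" "cmod x = cmod y"
  shows "x = y \<or> x = - y"
proof -
  define a where "a = (Im x * Re u - Re x * Im u) / (cmod u)^2"
  define b where "b = (Im y * Re u - Re y * Im u) / (cmod u)^2"
  have x: "x = complex_of_real a * (\<i> * u)" unfolding a_def by (rule perp_form[OF assms(1,3)])
  have y: "y = complex_of_real b * (\<i> * u)" unfolding b_def by (rule perp_form[OF assms(2,3)])
  have "\<bar>a\<bar> * cmod u = \<bar>b\<bar> * cmod u" using assms(4) unfolding x y by (simp add: norm_mult)
  then have "\<bar>a\<bar> = \<bar>b\<bar>" using assms(3) by simp
  then have "a = b \<or> a = - b" by linarith
  then show ?thesis unfolding x y by auto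
qed

text \<open>The three situations for a point s in the disk when the centre moves along the curve
  e \<mapsto> z0 - e u + e^2 t: s strictly inside, s on the circle on the open side of the line
  (inner product with u negative), or s = z0 + t on the line with t orthogonal to u.\<close>
lemma shrink_interior:
  fixes s z0 u t :: complex
  assumes "cmod (s - z0) < r"
  shows "eventually (\<lambda>e. cmod (s - (z0 - e *\<^sub>R u + e^2 *\<^sub>R t)) < r) (at_right 0)"
proof -
  have "((\<lambda>e. cmod (s - (z0 - e *\<^sub>R u + e^2 *\<^sub>R t))) \<longlongrightarrow> cmod (s - (z0 - 0 *\<^sub>R u + (0::real)^2 *\<^sub>R t))) (at_right 0)"
    by (intro tendsto_intros)
  then have "((\<lambda>e. cmod (s - (z0 - e *\<^sub>R u + e^2 *\<^sub>R t))) \<longlongrightarrow> cmod (s - z0)) (at_right 0)" by simp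
  then show ?thesis using assms by (rule order_tendstoD(2))
qed

lemma norm_shift_expand:
  fixes w u t :: complex
  shows "(cmod (w + e *\<^sub>R (u - e *\<^sub>R t)))^2 = (cmod w)^2 + 2*e*inner w u - 2*e^2*inner w t + e^2 * (cmod (u - e *\<^sub>R t))^2"
  unfolding power2_norm_eq_inner
  by (simp add: inner_add_left inner_add_right inner_diff_left inner_diff_right inner_commute power2_eq_square algebra_simps)

lemma shrink_boundary_inward:
  fixes w u t :: complex
  assumes r: "r > 0" and w: "cmod w = r" and g: "inner w u < 0" and u: "cmod u \<le> r" and t: "cmod t \<le> r"
  shows "eventually (\<lambda>e. cmod (w + e *\<^sub>R (u - e *\<^sub>R t)) < r) (at_right 0)"
proof -
  define \<gamma> where "\<gamma> = - inner w u"
  have g0: "\<gamma> > 0" using g by (simp add: \<gamma>_def)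
  define K where "K = 6 * r^2"
  have K0: "K > 0" using r by (simp add: K_def)
  have "eventually (\<lambda>e. 0 < e \<and> e < min 1 (\<gamma> / K)) (at_right (0::real))"
    using g0 K0 by (simp add: eventually_at_right_field) (metis divide_pos_pos less_numeral_extra(1) min_less_iff_conj)
  then show ?thesis
  proof (rule eventually_mono)
    fix e :: real assume e: "0 < e \<and> e < min 1 (\<gamma> / K)"
    have n1: "cmod (u - e *\<^sub>R t) \<le> 2 * r"
    proof -
      have "cmod (u - e *\<^sub>R t) \<le> cmod u + cmod (e *\<^sub>R t)" by (rule norm_triangle_ineq4)
      also have "cmod (e *\<^sub>R t) = e * cmod t" using e by simp
      also have "e * cmod t \<le> r" using e t r by (smt (verit) mult_left_le_one_le norm_ge_zero)
      finally show ?thesis using u by simp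
    qed
    have n1sq: "(cmod (u - e *\<^sub>R t))^2 \<le> 4 * r^2"
      using power_mono[OF n1 norm_ge_zero, of 2] by (simp add: power_mult_distrib)
    have it: "- inner w t \<le> r^2"
    proof -
      have "\<bar>inner w t\<bar> \<le> cmod w * cmod t" by (rule Cauchy_Schwarz_ineq2)
      also have "\<dots> \<le> r * r" using w t r by (simp add: mult_left_mono)
      finally show ?thesis by (simp add: power2_eq_square)
    qed
    have "(cmod (w + e *\<^sub>R (u - e *\<^sub>R t)))^2 = r^2 - 2*e*\<gamma> + e^2 * (-2 * inner w t + (cmod (u - e *\<^sub>R t))^2)"
      unfolding norm_shift_expand w \<gamma>_def by (simp add: algebra_simps)
    also have "\<dots> \<le> r^2 - 2*e*\<gamma> + e^2 * K"
      using it n1sq by (intro add_left_mono mult_left_mono) (auto simp: K_def)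
    also have "\<dots> < r^2"
    proof -
      have "e * K < \<gamma>" using e K0 by (simp add: less_divide_eq mult.commute)
      then have h1: "e * (e * K) < e * \<gamma>" using e by simp
      have h2: "e^2 * K = e * (e * K)" by (simp add: power2_eq_square)
      have "e * \<gamma> > 0" using e g0 by simp
      then show ?thesis using h1 h2 by linarith
    qed
    finally have "(cmod (w + e *\<^sub>R (u - e *\<^sub>R t)))^2 < r^2" .
    then show "cmod (w + e *\<^sub>R (u - e *\<^sub>R t)) < r" using r by (simp add: power_less_imp_less_base)
  qed
qed

lemma shrink_boundary_perp:
  fixes t u :: complex
  assumes r: "r > 0" and w: "cmod t = r" and g: "inner t u = 0" and u: "cmod u = r/2"
  shows "eventually (\<lambda>e. cmod (t + e *\<^sub>R (u - e *\<^sub>R t)) < r) (at_right 0)"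
proof -
  have "eventually (\<lambda>e. 0 < e \<and> e < 1) (at_right (0::real))"
    by (simp add: eventually_at_right_field) (metis less_numeral_extra(1))
  then show ?thesis
  proof (rule eventually_mono)
    fix e :: real assume e: "0 < e \<and> e < 1"
    have "(cmod (u - e *\<^sub>R t))^2 = (cmod u)^2 + e^2 * (cmod t)^2"
      unfolding power2_norm_eq_inner using g by (simp add: inner_diff_left inner_diff_right inner_commute power2_eq_square algebra_simps)
    then have a: "(cmod (u - e *\<^sub>R t))^2 = r^2/4 + e^2 * r^2" using u w by (simp add: power_divide)
    have "(cmod (t + e *\<^sub>R (u - e *\<^sub>R t)))^2 = r^2 - 2*e^2*r^2 + e^2 * (r^2/4 + e^2 * r^2)"
      unfolding norm_shift_expand a w using g by (simp add: power2_norm_eq_inner[symmetric] w)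
    also have "\<dots> = r^2 - e^2 * r^2 * (7/4 - e^2)" by (simp add: algebra_simps power2_eq_square)
    also have "\<dots> < r^2"
    proof -
      have "e^2 < 1" using e by (simp add: power_less_one_iff abs_less_iff)
      then have "7/4 - e^2 > 0" by simp
      moreover have "e^2 * r^2 > 0" using e r by simp
      ultimately show ?thesis by simp
    qed
    finally have "(cmod (t + e *\<^sub>R (u - e *\<^sub>R t)))^2 < r^2" .
    then show "cmod (t + e *\<^sub>R (u - e *\<^sub>R t)) < r" using r by (simp add: power_less_imp_less_base)
  qed
qed

lemma shrink_point:
  fixes s z0 u t :: complex
  assumes r: "r > 0" and inside: "cmod (s - z0) \<le> r" and half: "inner (s - z0) u \<le> 0"
    and u: "cmod u = r/2" and t: "cmod t \<le> r"
    and on_line: "cmod (s - z0) = r \<Longrightarrow> inner (s - z0) u = 0 \<Longrightarrow> s - z0 = t"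
  shows "eventually (\<lambda>e. cmod (s - (z0 - e *\<^sub>R u + e^2 *\<^sub>R t)) < r) (at_right 0)"
proof -
  have shift: "s - (z0 - e *\<^sub>R u + e^2 *\<^sub>R t) = (s - z0) + e *\<^sub>R (u - e *\<^sub>R t)" for e
    by (simp add: algebra_simps power2_eq_square)
  consider "cmod (s - z0) < r" | "cmod (s - z0) = r" "inner (s - z0) u < 0"
    | "cmod (s - z0) = r" "inner (s - z0) u = 0"
    using inside half by linarith
  then show ?thesis
  proof cases
    case 1 then show ?thesis by (rule shrink_interior)
  next
    case 2 then show ?thesis unfolding shift using shrink_boundary_inward[OF r] u t r by simp
  next
    case 3
    then have "s - z0 = t" by (rule on_line)
    then show ?thesis unfolding shift using shrink_boundary_perp[OF r _ _ u] 3 by simp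
  qed
qed

lemma is_SED_no_strict_cover:
  assumes fin: "finite S" and ne: "S \<noteq> {}" and sed: "is_SED S z0 r"
    and strict: "\<And>s. s \<in> S \<Longrightarrow> cmod (s - z) < r"
  shows False
proof -
  define r' where "r' = Max ((\<lambda>s. cmod (s - z)) ` S)"
  have "r' < r" unfolding r'_def using fin ne strict by (simp add: Max_less_iff)
  moreover have "S \<subseteq> cball z r'"
  proof
    fix s assume "s \<in> S"
    then have "cmod (s - z) \<le> r'" unfolding r'_def using fin by (intro Max_ge) auto
    then show "s \<in> cball z r'" by (simp add: dist_norm norm_minus_commute)
  qed
  then have "r \<le> r'" using sed unfolding is_SED_def by blast
  ultimately show False by simp
qed

lemma sed_antipodal_pair:
  fixes S :: "complex set" and z0 u :: complex and r :: real
  assumes fin: "finite S" and ne: "S \<noteq> {}" and sed: "is_SED S z0 r" and z0S: "z0 \<notin> S"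
    and u: "u \<noteq> 0" and half: "\<And>s. s \<in> S \<Longrightarrow> inner (s - z0) u \<le> 0"
  shows "r > 0 \<and> (\<exists>a. a \<in> S \<and> 2*z0 - a \<in> S \<and> inner (a - z0) u = 0 \<and> cmod (a - z0) = r)"
proof -
  have inside: "cmod (s - z0) \<le> r" if "s \<in> S" for s
    using sed that unfolding is_SED_def by (auto simp: dist_norm norm_minus_commute)
  obtain s0 where s0: "s0 \<in> S" using ne by blast
  have "s0 \<noteq> z0" using s0 z0S by auto
  then have r0: "r > 0" using inside[OF s0] by (smt (verit) eq_iff_diff_eq_0 zero_less_norm_iff)
  show ?thesis
  proof (rule ccontr)
    assume "\<not> ?thesis"
    then have no_pair: "\<And>a. a \<in> S \<Longrightarrow> inner (a - z0) u = 0 \<Longrightarrow> cmod (a - z0) = r \<Longrightarrow> 2*z0 - a \<notin> S"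
      using r0 by blast
    let ?P = "\<lambda>a. a \<in> S \<and> inner (a - z0) u = 0 \<and> cmod (a - z0) = r"
    define u' where "u' = (r / (2 * cmod u)) *\<^sub>R u"
    have nu': "cmod u' = r/2" using u r0 by (simp add: u'_def)
    have cpos: "r / (2 * cmod u) > 0" using u r0 by simp
    have scaled: "inner w u' = (r / (2 * cmod u)) * inner w u" for w by (simp add: u'_def)
    have iu': "inner w u' \<le> 0 \<longleftrightarrow> inner w u \<le> 0" "inner w u' = 0 \<longleftrightarrow> inner w u = 0" for w
      using cpos unfolding scaled mult_le_0_iff mult_eq_0_iff by auto
    define t where "t = (if \<exists>a. ?P a then (SOME a. ?P a) - z0 else 0)"
    have nt: "cmod t \<le> r" using r0 by (auto simp: t_def dest!: someI_ex[where P = ?P])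
    have on_line: "s - z0 = t" if sS: "s \<in> S" and "cmod (s - z0) = r" "inner (s - z0) u = 0" for s
    proof -
      have ex: "\<exists>a. ?P a" using sS that by blast
      define a where "a = (SOME a. ?P a)"
      have a: "?P a" using someI_ex[OF ex] unfolding a_def .
      have "s - z0 = a - z0 \<or> s - z0 = - (a - z0)" using perp_same_norm[of "s - z0" u "a - z0"] a u that by simp
      moreover have "s \<noteq> 2*z0 - a" using no_pair[of a] a sS by auto
      then have "s - z0 \<noteq> - (a - z0)" by (auto simp: algebra_simps)
      ultimately show ?thesis using ex unfolding t_def a_def by simp
    qed
    have "eventually (\<lambda>e. cmod (s - (z0 - e *\<^sub>R u' + e^2 *\<^sub>R t)) < r) (at_right 0)" if "s \<in> S" for s
      using shrink_point[OF r0 inside[OF that] _ nu' nt] half[OF that] on_line[OF that] iu' by simp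
    then have "eventually (\<lambda>e. \<forall>s\<in>S. cmod (s - (z0 - e *\<^sub>R u' + e^2 *\<^sub>R t)) < r) (at_right 0)"
      using fin by (simp add: eventually_ball_finite)
    then obtain e where "\<forall>s\<in>S. cmod (s - (z0 - e *\<^sub>R u' + e^2 *\<^sub>R t)) < r"
      using eventually_happens trivial_limit_at_right_real by blast
    then show False using is_SED_no_strict_cover[OF fin ne sed] by blast
  qed
qed

lemma half_disk_half_plane:
  assumes "half_disk S z0"
  obtains u where "u \<noteq> 0" "\<And>s. s \<in> S \<Longrightarrow> inner (s - z0) u \<le> 0"
proof -
  obtain u where u: "u \<noteq> 0"
    and xor: "(S \<inter> {x. inner (x - z0) u > 0} = {}) \<noteq> (S \<inter> {x. inner (x - z0) u < 0} = {})"
    using assms unfolding half_disk_def by blast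
  show thesis
  proof (cases "S \<inter> {x. inner (x - z0) u > 0} = {}")
    case True
    then have "inner (s - z0) u \<le> 0" if "s \<in> S" for s using that by (auto simp: not_less)
    then show thesis using that[OF u] by blast
  next
    case False
    then have "S \<inter> {x. inner (x - z0) u < 0} = {}" using xor by simp
    then have "inner (s - z0) (- u) \<le> 0" if "s \<in> S" for s using that by (auto simp: not_less)
    then show thesis using that[of "- u"] u by simp
  qed
qed

lemma inner_mult_i: "D \<noteq> 0 \<Longrightarrow> inner w (\<i> * D) = Im (w / D) * (cmod D)^2"
proof -
  assume D: "D \<noteq> 0"
  have n: "(Re D)^2 + (Im D)^2 \<noteq> 0" using D by (simp add: complex_eq_iff sum_power2_eq_zero_iff)
  show ?thesis unfolding inner_complex_def cmod_power2 using n
    by (simp add: Im_divide field_simps power2_eq_square)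
qed

lemma half_disk_normal_form:
  assumes fin: "finite S" and ne: "S \<noteq> {}" and sed: "is_SED S z0 r" and z0S: "z0 \<notin> S"
    and hd: "half_disk S z0"
  obtains \<alpha> \<beta> :: complex where "\<alpha> \<noteq> 0"
    "-(1/2) \<in> (\<lambda>x. \<alpha> * x + \<beta>) ` S" "1/2 \<in> (\<lambda>x. \<alpha> * x + \<beta>) ` S"
    "\<And>s. s \<in> S \<Longrightarrow> cmod (\<alpha> * s + \<beta>) \<le> 1/2" "\<And>s. s \<in> S \<Longrightarrow> Im (\<alpha> * s + \<beta>) \<le> 0"
proof -
  obtain u where u: "u \<noteq> 0" and half: "\<And>s. s \<in> S \<Longrightarrow> inner (s - z0) u \<le> 0"
    using half_disk_half_plane[OF hd] by blast
  obtain a where r0: "r > 0" and a: "a \<in> S" "2*z0 - a \<in> S" "inner (a - z0) u = 0" "cmod (a - z0) = r"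
    using sed_antipodal_pair[OF fin ne sed z0S u half] by blast
  define \<kappa> where "\<kappa> = 2 * r / cmod u"
  have \<kappa>0: "\<kappa> > 0" using r0 u by (simp add: \<kappa>_def)
  define D where "D = - complex_of_real \<kappa> * (\<i> * u)"
  have iD: "\<i> * D = complex_of_real \<kappa> * u" by (simp add: D_def algebra_simps)
  have "cmod D = \<kappa> * cmod u" using \<kappa>0 by (simp add: D_def norm_mult)
  then have nD: "cmod D = 2 * r" using u by (simp add: \<kappa>_def)
  have D0: "D \<noteq> 0" using nD r0 by auto
  have "inner (D/2) u = 0"
    by (simp add: D_def inner_complex_def algebra_simps)
  moreover have "cmod (a - z0) = cmod (D/2)" using a(4) nD by simp
  ultimately have "a - z0 = D/2 \<or> a - z0 = - (D/2)" using perp_same_norm[OF a(3) _ u] by blast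
  then have ends: "{(a - z0) / D, (2*z0 - a - z0) / D} = {-(1/2), 1/2}"
    using D0 by (auto simp: field_simps)
  let ?f = "\<lambda>x. (1/D) * x + (- z0 / D)"
  have f: "?f x = (x - z0) / D" for x by (simp add: diff_divide_distrib)
  show thesis
  proof (rule that[of "1/D" "- z0/D"])
    show "1/D \<noteq> 0" using D0 by simp
    have "{(a - z0) / D, (2*z0 - a - z0) / D} \<subseteq> ?f ` S" unfolding f using a(1,2) by blast
    then show "-(1/2) \<in> ?f ` S" "1/2 \<in> ?f ` S" unfolding ends by auto
  next
    fix s assume s: "s \<in> S"
    have "cmod (s - z0) \<le> r" using sed s unfolding is_SED_def by (auto simp: dist_norm norm_minus_commute)
    then show "cmod (?f s) \<le> 1/2" unfolding f norm_divide nD using r0 by (simp add: field_simps)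
    have "\<kappa> * inner (s - z0) u \<le> 0" using half[OF s] \<kappa>0 by (simp add: mult_le_0_iff)
    then have "Im ((s - z0) / D) * (cmod D)^2 \<le> 0"
      unfolding inner_mult_i[OF D0, symmetric] iD by (simp add: inner_complex_def algebra_simps)
    then show "Im (?f s) \<le> 0" unfolding f using D0 by (simp add: mult_le_0_iff)
  qed
qed

text \<open>Vertices of the regular n-gon with centre c, circumradius \<rho> and rotation th, indexed by
  integers so that indices can be shifted freely; the index is only relevant modulo n.\<close>
definition vtx :: "nat \<Rightarrow> complex \<Rightarrow> real \<Rightarrow> real \<Rightarrow> int \<Rightarrow> complex" where
  "vtx n c \<rho> th k = c + complex_of_real \<rho> * cis (th + 2*pi*real_of_int k / real n)"

lemma cis_add_2pi_int: "cis (x + 2*pi*real_of_int z) = cis x"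
proof -
  have "cis (x + 2*pi*real_of_int z) = cis x * cis (2*pi*real_of_int z)" by (rule cis_mult[symmetric])
  also have "cis (2*pi*real_of_int z) = 1" by (rule cis_multiple_2pi) simp
  finally show ?thesis by simp
qed

lemma vtx_period:
  assumes "n > 0" shows "vtx n c \<rho> th (k + int n * z) = vtx n c \<rho> th k"
proof -
  have e: "th + 2*pi*real_of_int (k + int n * z) / real n = (th + 2*pi*real_of_int k / real n) + 2*pi*real_of_int z"
    using assms by (simp add: field_simps)
  show ?thesis unfolding vtx_def by (simp only: e cis_add_2pi_int)
qed

lemma vtx_mod:
  assumes "n > 0" shows "vtx n c \<rho> th (k mod int n) = vtx n c \<rho> th k"
proof -
  have "k = k mod int n + int n * (k div int n)" by simp
  then have "vtx n c \<rho> th k = vtx n c \<rho> th (k mod int n + int n * (k div int n))" by simp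
  also have "\<dots> = vtx n c \<rho> th (k mod int n)" using vtx_period[OF assms] by blast
  finally show ?thesis by simp
qed

lemma vtx_cong: "n > 0 \<Longrightarrow> a mod int n = b mod int n \<Longrightarrow> vtx n c \<rho> th a = vtx n c \<rho> th b"
  by (metis vtx_mod)

lemma reg_vertex_vtx: "reg_vertex n c r th m = vtx n c r th (int m)"
  by (simp add: reg_vertex_def vtx_def)

lemma reg_edge_mod:
  assumes n: "n > 0"
  shows "reg_edge n c r th (nat (k mod int n)) = closed_segment (vtx n c r th k) (vtx n c r th (k+1))"
    and "reg_edge_int n c r th (nat (k mod int n)) = open_segment (vtx n c r th k) (vtx n c r th (k+1))"
    and "Suc (nat (k mod int n)) mod n = nat ((k + 1) mod int n)"
proof -
  have "0 \<le> k mod int n" by (rule pos_mod_sign) (use n in simp)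
  then have ik: "int (nat (k mod int n)) = k mod int n" by (rule nat_0_le)
  have v1: "vtx n c r th (int (nat (k mod int n))) = vtx n c r th k"
    unfolding ik by (rule vtx_cong[OF n]) simp
  have v2: "vtx n c r th (int (nat (k mod int n)) + 1) = vtx n c r th (k+1)"
    unfolding ik by (rule vtx_cong[OF n]) (simp add: mod_add_left_eq)
  show "reg_edge n c r th (nat (k mod int n)) = closed_segment (vtx n c r th k) (vtx n c r th (k+1))"
    "reg_edge_int n c r th (nat (k mod int n)) = open_segment (vtx n c r th k) (vtx n c r th (k+1))"
    using v1 v2 by (simp_all add: reg_edge_def reg_edge_int_def reg_vertex_vtx add.commute)
  have "int (Suc (nat (k mod int n)) mod n) = (int (nat (k mod int n)) + 1) mod int n"
    by (simp add: zmod_int ac_simps del: int_nat_eq)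
  also have "\<dots> = (k mod int n + 1) mod int n" unfolding ik ..
  also have "\<dots> = (k + 1) mod int n" by (rule mod_add_left_eq)
  finally show "Suc (nat (k mod int n)) mod n = nat ((k + 1) mod int n)" by linarith
qed

lemma vtx_edge_formula:
  "vtx n c \<rho> th (k+1) - vtx n c \<rho> th k = complex_of_real \<rho> * cis (th + 2*pi*real_of_int k / real n) * (cis (2*pi/real n) - 1)"
proof -
  have "th + 2*pi*real_of_int (k+1) / real n = (th + 2*pi*real_of_int k / real n) + 2*pi/real n"
    by (simp add: add_divide_distrib algebra_simps)
  then show ?thesis unfolding vtx_def by (simp add: cis_mult[symmetric] algebra_simps)
qed

lemma vtx_edge_rotate:
  "vtx n c \<rho> th (k+j+1) - vtx n c \<rho> th (k+j) = cis (2*pi*real_of_int j/real n) * (vtx n c \<rho> th (k+1) - vtx n c \<rho> th k)"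
proof -
  have e: "th + 2*pi*real_of_int (k+j) / real n = (th + 2*pi*real_of_int k / real n) + 2*pi*real_of_int j/real n"
    by (simp add: add_divide_distrib algebra_simps)
  have "vtx n c \<rho> th (k+j+1) - vtx n c \<rho> th (k+j) = complex_of_real \<rho> * cis (th + 2*pi*real_of_int (k+j) / real n) * (cis (2*pi/real n) - 1)"
    by (rule vtx_edge_formula)
  also have "\<dots> = complex_of_real \<rho> * (cis (th + 2*pi*real_of_int k / real n) * cis (2*pi*real_of_int j/real n)) * (cis (2*pi/real n) - 1)"
    by (simp only: e cis_mult)
  also have "\<dots> = cis (2*pi*real_of_int j/real n) * (complex_of_real \<rho> * cis (th + 2*pi*real_of_int k / real n) * (cis (2*pi/real n) - 1))"
    by (simp only: mult_ac)
  also have "\<dots> = cis (2*pi*real_of_int j/real n) * (vtx n c \<rho> th (k+1) - vtx n c \<rho> th k)"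
    by (simp only: vtx_edge_formula)
  finally show ?thesis .
qed
text \<open>Signed area of the triangle with vertices a, a + s, a + t of the polygon: it is positive
  whenever 0 < s < t < n, i.e. the polygon is convex and positively oriented.\<close>
lemma cross_vertices:
  "cross (vtx n c \<rho> th (a+s) - vtx n c \<rho> th a) (vtx n c \<rho> th (a+t) - vtx n c \<rho> th a)
     = 4*\<rho>^2 * sin (pi*real_of_int s/real n) * sin (pi*real_of_int (t-s)/real n) * sin (pi*real_of_int t/real n)"
proof -
  define B where "B = th + 2*pi*real_of_int a/real n"
  define X where "X = pi*real_of_int s/real n"
  define Y where "Y = pi*real_of_int (t-s)/real n"
  have XY: "X + Y = pi*real_of_int t/real n" unfolding X_def Y_def by (simp add: add_divide_distrib[symmetric] algebra_simps)
  have hA: "th + 2*pi*real_of_int (a+s)/real n = B + 2*X" unfolding B_def X_def by (simp add: add_divide_distrib algebra_simps)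
  have hC: "th + 2*pi*real_of_int (a+t)/real n = B + 2*X + 2*Y"
  proof -
    have "th + 2*pi*real_of_int (a+t)/real n = B + 2*(X+Y)" unfolding B_def XY by (simp add: add_divide_distrib algebra_simps)
    then show ?thesis by simp
  qed
  have "cross (vtx n c \<rho> th (a+s) - vtx n c \<rho> th a) (vtx n c \<rho> th (a+t) - vtx n c \<rho> th a)
     = \<rho>^2 * ((cos (B+2*X) - cos B)*(sin (B+2*X+2*Y) - sin B) - (sin (B+2*X) - sin B)*(cos (B+2*X+2*Y) - cos B))"
    unfolding vtx_def hA hC B_def[symmetric] cross_expand by (simp add: cis.sel power2_eq_square algebra_simps)
  also have "\<dots> = \<rho>^2 * (sin (2*Y) + sin (2*X) - sin (2*X + 2*Y))"
    unfolding cross_cos_sin by (simp add: algebra_simps)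
  also have "\<dots> = \<rho>^2 * (4 * sin X * sin Y * sin (X+Y))" by (simp only: sin_double_sum)
  finally show ?thesis unfolding XY by (simp add: X_def Y_def algebra_simps)
qed

lemma affine_segment:
  fixes \<alpha> \<beta> :: complex assumes "\<alpha> \<noteq> 0"
  shows "\<alpha> * x + \<beta> \<in> closed_segment (\<alpha> * a + \<beta>) (\<alpha> * b + \<beta>) \<longleftrightarrow> x \<in> closed_segment a b"
    and "\<alpha> * x + \<beta> \<in> open_segment (\<alpha> * a + \<beta>) (\<alpha> * b + \<beta>) \<longleftrightarrow> x \<in> open_segment a b"
proof -
  have e: "\<alpha> * x + \<beta> = \<alpha> * a + \<beta> + complex_of_real t * (\<alpha> * b + \<beta> - (\<alpha> * a + \<beta>)) \<longleftrightarrow>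
           x = a + complex_of_real t * (b - a)" for t
  proof -
    have "\<alpha> * a + \<beta> + complex_of_real t * (\<alpha> * b + \<beta> - (\<alpha> * a + \<beta>)) = \<alpha> * (a + complex_of_real t * (b - a)) + \<beta>"
      by (simp add: algebra_simps)
    then show ?thesis using assms by simp
  qed
  have ne: "\<alpha> * a + \<beta> \<noteq> \<alpha> * b + \<beta> \<longleftrightarrow> a \<noteq> b" using assms by simp
  show "\<alpha> * x + \<beta> \<in> closed_segment (\<alpha> * a + \<beta>) (\<alpha> * b + \<beta>) \<longleftrightarrow> x \<in> closed_segment a b"
    unfolding closed_segment_param e ..
  show "\<alpha> * x + \<beta> \<in> open_segment (\<alpha> * a + \<beta>) (\<alpha> * b + \<beta>) \<longleftrightarrow> x \<in> open_segment a b"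
    unfolding open_segment_param e ne ..
qed

lemma affine_image_segment:
  fixes \<alpha> \<beta> :: complex assumes "\<alpha> \<noteq> 0"
  shows "(\<lambda>x. \<alpha> * x + \<beta>) ` S \<inter> closed_segment (\<alpha> * a + \<beta>) (\<alpha> * b + \<beta>) = (\<lambda>x. \<alpha> * x + \<beta>) ` (S \<inter> closed_segment a b)"
    and "(\<lambda>x. \<alpha> * x + \<beta>) ` S \<inter> open_segment (\<alpha> * a + \<beta>) (\<alpha> * b + \<beta>) = (\<lambda>x. \<alpha> * x + \<beta>) ` (S \<inter> open_segment a b)"
  using affine_segment[OF assms] by auto

lemma vtx_affine:
  fixes \<alpha> \<beta> :: complex assumes "\<alpha> \<noteq> 0"
  shows "\<alpha> * vtx n c \<rho> th k + \<beta> = vtx n (\<alpha> * c + \<beta>) (\<rho> * cmod \<alpha>) (th + Arg \<alpha>) k"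
proof -
  have a: "\<alpha> = complex_of_real (cmod \<alpha>) * cis (Arg \<alpha>)" using rcis_cmod_Arg[of \<alpha>] by (simp add: rcis_def)
  have "th + Arg \<alpha> + 2*pi*real_of_int k/real n = (th + 2*pi*real_of_int k/real n) + Arg \<alpha>" by simp
  then have "cis (th + Arg \<alpha> + 2*pi*real_of_int k/real n) = cis (th + 2*pi*real_of_int k/real n) * cis (Arg \<alpha>)"
    by (simp only: cis_mult)
  moreover have "\<alpha> * (complex_of_real \<rho> * cis (th + 2*pi*real_of_int k/real n)) =
     complex_of_real (cmod \<alpha>) * cis (Arg \<alpha>) * (complex_of_real \<rho> * cis (th + 2*pi*real_of_int k/real n))"
    using a by metis
  ultimately show ?thesis unfolding vtx_def by (simp add: algebra_simps)
qed

lemma mod_succ_cases: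
  fixes s m :: int assumes "m > 0"
  shows "(s + 1) mod m = (if s mod m + 1 = m then 0 else s mod m + 1)"
proof -
  have "(s + 1) mod m = (s mod m + 1) mod m" by (simp add: mod_add_left_eq)
  moreover have "0 \<le> s mod m" "s mod m < m" using assms by simp_all
  ultimately show ?thesis by (auto simp: mod_pos_pos_trivial)
qed

lemma mod_succ_of_diff: "(x - y) mod (m::int) = 1 mod m \<Longrightarrow> x mod m = (y + 1) mod m"
  by (simp add: mod_eq_dvd_iff algebra_simps)

locale prereg =
  fixes n :: nat and c :: complex and \<rho> :: real and th :: real and S :: "complex set"
  assumes n5: "n \<ge> 5" and rho: "\<rho> > 0" and finS: "finite S" and cardS: "card S = n"
  and pair: "\<And>k. (card (S \<inter> closed_segment (vtx n c \<rho> th k) (vtx n c \<rho> th (k+1))) = 2 \<and>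
                     S \<inter> open_segment (vtx n c \<rho> th (k+1)) (vtx n c \<rho> th (k+1+1)) = {}) \<or>
                  (card (S \<inter> closed_segment (vtx n c \<rho> th (k+1)) (vtx n c \<rho> th (k+1+1))) = 2 \<and>
                     S \<inter> open_segment (vtx n c \<rho> th k) (vtx n c \<rho> th (k+1)) = {})"
begin

abbreviation W where "W \<equiv> vtx n c \<rho> th"
abbreviation d where "d k \<equiv> W (k+1) - W k"
abbreviation E where "E k \<equiv> closed_segment (W k) (W (k+1))"
abbreviation I where "I k \<equiv> open_segment (W k) (W (k+1))"

lemma n_pos: "n > 0" using n5 by simp
lemma n_ge5_int: "int n \<ge> 5" using n5 by simp

lemma W_cong: "a mod int n = b mod int n \<Longrightarrow> W a = W b"
  by (rule vtx_cong[OF n_pos])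

lemma sin_pi_frac_pos: "0 < s \<Longrightarrow> s < int n \<Longrightarrow> sin (pi * real_of_int s / real n) > 0"
  by (rule sin_gt_zero) (use n_pos in \<open>auto simp: field_simps\<close>)

lemma sin_pi_frac_nonneg: "0 \<le> s \<Longrightarrow> s \<le> int n \<Longrightarrow> sin (pi * real_of_int s / real n) \<ge> 0"
  by (rule sin_ge_zero) (use n_pos in \<open>auto simp: field_simps\<close>)

lemma cross_vertex:
  shows "cross (d k) (W j - W k) \<ge> 0"
    and "(j - k) mod int n \<noteq> 0 \<Longrightarrow> (j - k) mod int n \<noteq> 1 \<Longrightarrow> cross (d k) (W j - W k) > 0"
proof -
  define s where "s = (j - k) mod int n"
  have s0: "0 \<le> s" "s < int n" using n_pos by (simp_all add: s_def)
  have Wj: "W j = W (k + s)" by (rule W_cong) (simp add: s_def mod_add_right_eq)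
  have A: "cross (d k) (W j - W k) = 4*\<rho>^2 * sin (pi*real_of_int 1/real n) * sin (pi*real_of_int (s-1)/real n) * sin (pi*real_of_int s/real n)"
    unfolding Wj using cross_vertices[of n c \<rho> th k 1 s] by simp
  have p1: "sin (pi*real_of_int 1/real n) > 0" by (rule sin_pi_frac_pos) (use n_ge5_int in auto)
  show "cross (d k) (W j - W k) \<ge> 0"
  proof (cases "s = 0")
    case True then show ?thesis unfolding A by simp
  next
    case False
    then have "sin (pi*real_of_int (s-1)/real n) \<ge> 0" "sin (pi*real_of_int s/real n) \<ge> 0"
      using s0 sin_pi_frac_nonneg[of "s-1"] sin_pi_frac_nonneg[of s] by auto
    then show ?thesis unfolding A using p1 rho by (auto intro!: mult_nonneg_nonneg)
  qed
  assume "(j - k) mod int n \<noteq> 0" "(j - k) mod int n \<noteq> 1"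
  then have "s \<ge> 2" using s0 unfolding s_def by linarith
  then have "sin (pi*real_of_int (s-1)/real n) > 0" "sin (pi*real_of_int s/real n) > 0"
    using s0 sin_pi_frac_pos[of "s-1"] sin_pi_frac_pos[of s] by auto
  then show "cross (d k) (W j - W k) > 0" unfolding A using p1 rho by (auto intro!: mult_pos_pos)
qed

lemma edge_param: "x \<in> E k \<longleftrightarrow> (\<exists>t. 0 \<le> t \<and> t \<le> 1 \<and> x = W k + complex_of_real t * d k)"
  by (rule closed_segment_param)

lemma cross_edge_nonneg: "x \<in> E j \<Longrightarrow> cross (d k) (x - W k) \<ge> 0"
proof -
  assume "x \<in> E j"
  then obtain t where t: "0 \<le> t" "t \<le> 1" "x = W j + complex_of_real t * d j" by (auto simp: edge_param)
  have "cross (d k) (x - W k) = (1 - t) * cross (d k) (W j - W k) + t * cross (d k) (W (j+1) - W k)"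
    unfolding t(3) by (rule cross_segment_point)
  then show ?thesis using cross_vertex(1)[of k j] cross_vertex(1)[of k "j+1"] t by simp
qed

lemma cross_on_edge: "x \<in> E k \<Longrightarrow> cross (d k) (x - W k) = 0"
proof -
  assume "x \<in> E k"
  then obtain t where t: "x = W k + complex_of_real t * d k" by (auto simp: edge_param)
  show ?thesis unfolding t by (simp add: cross_self)
qed

lemma line_meets_edge:
  assumes x: "x \<in> E j" and z: "cross (d k) (x - W k) = 0"
  shows "(j - k) mod int n = 0 \<or> ((j - k) mod int n = 1 \<and> x = W j) \<or> ((k - j) mod int n = 1 \<and> x = W k)"
proof -
  obtain t where t: "0 \<le> t" "t \<le> 1" "x = W j + complex_of_real t * d j" using x by (auto simp: edge_param)
  have e: "(1 - t) * cross (d k) (W j - W k) + t * cross (d k) (W (j+1) - W k) = 0"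
    using z unfolding t(3) cross_segment_point .
  have A: "cross (d k) (W j - W k) \<ge> 0" "cross (d k) (W (j+1) - W k) \<ge> 0" by (rule cross_vertex(1))+
  have m1: "(j + 1 - k) mod int n = (if (j-k) mod int n + 1 = int n then 0 else (j-k) mod int n + 1)"
    using mod_succ_cases[of "int n" "j - k"] n_pos by (simp add: algebra_simps)
  have kj: "(k - j) mod int n = 1" if "(j + 1 - k) mod int n = 0"
  proof -
    have "(k - j) mod int n = (1 - (j + 1 - k)) mod int n" by simp
    also have "\<dots> = (1 mod int n - (j + 1 - k) mod int n) mod int n" by (simp add: mod_diff_eq)
    also have "\<dots> = 1" using that n_ge5_int by simp
    finally show ?thesis .
  qed
  show ?thesis
  proof (cases "t = 0")
    case True
    then have "cross (d k) (W j - W k) = 0" using e by simp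
    then have "(j - k) mod int n = 0 \<or> (j - k) mod int n = 1" using cross_vertex(2)[of j k] by fastforce
    then show ?thesis using True t(3) by auto
  next
    case False
    show ?thesis
    proof (cases "t = 1")
      case True
      then have "cross (d k) (W (j+1) - W k) = 0" using e by simp
      then have "(j + 1 - k) mod int n = 0 \<or> (j + 1 - k) mod int n = 1" using cross_vertex(2)[of "j+1" k] by fastforce
      moreover have "x = W (j+1)" using True t(3) by simp
      moreover have "W (j+1) = W k" if "(j + 1 - k) mod int n = 0"
        by (rule W_cong) (use that in \<open>simp add: mod_eq_dvd_iff dvd_eq_mod_eq_0\<close>)
      ultimately show ?thesis using m1 kj by (auto split: if_splits)
    next
      case False
      with \<open>t \<noteq> 0\<close> t have tt: "0 < t" "t < 1" by auto
      have "cross (d k) (W j - W k) = 0" "cross (d k) (W (j+1) - W k) = 0"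
        using e A tt by (smt (verit, best) mult_nonneg_nonneg mult_pos_pos)+
      then have "(j - k) mod int n \<in> {0,1}" "(j + 1 - k) mod int n \<in> {0,1}"
        using cross_vertex(2)[of j k] cross_vertex(2)[of "j+1" k] by fastforce+
      then show ?thesis using m1 n_ge5_int by (auto split: if_splits)
    qed
  qed
qed

lemma edge_nonzero: "d k \<noteq> 0"
proof
  assume "d k = 0"
  then have "cross (d k) (W (k+2) - W k) = 0" by (simp add: cross_def)
  moreover have "cross (d k) (W (k+2) - W k) > 0" by (rule cross_vertex(2)) (use n_ge5_int in auto)
  ultimately show False by simp
qed

lemma line_point_on_edge: "x \<in> E j \<Longrightarrow> cross (d k) (x - W k) = 0 \<Longrightarrow> x \<in> E k"
proof -
  assume x: "x \<in> E j" and z: "cross (d k) (x - W k) = 0"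
  from line_meets_edge[OF x z] show ?thesis
  proof (elim disjE conjE)
    assume "(j - k) mod int n = 0"
    then have "W j = W k" "W (j+1) = W (k+1)"
      by (auto intro!: W_cong simp: mod_eq_dvd_iff dvd_eq_mod_eq_0)
    then show ?thesis using x by simp
  next
    assume "(j - k) mod int n = 1" "x = W j"
    then have "W j = W (k+1)" using n_ge5_int by (intro W_cong mod_succ_of_diff) simp
    then show ?thesis using \<open>x = W j\<close> by simp
  next
    assume "x = W k" then show ?thesis by simp
  qed
qed

lemma edges_meet_at_vertex:
  assumes "x \<in> E j" "x \<in> E k" "(j - k) mod int n \<noteq> 0"
  shows "((j - k) mod int n = 1 \<and> x = W j) \<or> ((k - j) mod int n = 1 \<and> x = W k)"
  using line_meets_edge[OF assms(1) cross_on_edge[OF assms(2)]] assms(3) by auto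
lemma full_edge_points:
  assumes "card (S \<inter> E k) = 2"
  shows "\<exists>a b. a \<in> S \<inter> E k \<and> b \<in> S \<inter> E k \<and> a \<noteq> b \<and> a \<noteq> W (k+1) \<and> b \<noteq> W k"
proof -
  obtain x y where xy: "x \<noteq> y" "S \<inter> E k = {x, y}" using assms by (auto simp: card_2_iff)
  have ne: "W k \<noteq> W (k+1)" using edge_nonzero[of k] by auto
  show ?thesis
  proof (cases "x = W (k+1)")
    case True then show ?thesis using xy ne by (intro exI[of _ y] exI[of _ x]) auto
  next
    case False
    show ?thesis
    proof (cases "y = W k")
      case True then show ?thesis using xy ne False by (intro exI[of _ y] exI[of _ x]) auto
    next
      case F2: False
      show ?thesis using xy False F2 by (intro exI[of _ x] exI[of _ y]) auto
    qed
  qed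
qed

lemma full_edge_adjacent: "card (S \<inter> E k) = 2 \<or> card (S \<inter> E (k+1)) = 2"
  using pair[of k] by auto
lemma full_edge_nonempty: "card (S \<inter> E k) = 2 \<Longrightarrow> \<exists>s. s \<in> S \<and> s \<in> E k"
  by (metis card.empty disjoint_iff zero_neq_numeral)

lemma full_edge_other: "card (S \<inter> E k) = 2 \<Longrightarrow> \<exists>s. s \<in> S \<and> s \<in> E k \<and> s \<noteq> y"
proof -
  assume "card (S \<inter> E k) = 2"
  then obtain x z where xz: "x \<noteq> z" "S \<inter> E k = {x, z}" by (auto simp: card_2_iff)
  then have "x \<in> S \<inter> E k" "z \<in> S \<inter> E k" by auto
  then show ?thesis using xz(1) by (cases "x = y") blast+
qed

lemma edges_meet_right_open:
  assumes "x \<in> E j" "x \<in> E k" "x \<noteq> W (j+1)" "x \<noteq> W (k+1)"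
  shows "j mod int n = k mod int n"
proof (rule ccontr)
  assume "j mod int n \<noteq> k mod int n"
  then have "(j - k) mod int n \<noteq> 0" by (simp add: mod_eq_dvd_iff dvd_eq_mod_eq_0)
  with edges_meet_at_vertex[OF assms(1,2)] consider
      "(j - k) mod int n = 1" "x = W j" | "(k - j) mod int n = 1" "x = W k" by blast
  then show False
  proof cases
    case 1
    then have "W j = W (k+1)" using n_ge5_int by (intro W_cong mod_succ_of_diff) simp
    then show False using 1 assms(4) by simp
  next
    case 2
    then have "W k = W (j+1)" using n_ge5_int by (intro W_cong mod_succ_of_diff) simp
    then show False using 2 assms(3) by simp
  qed
qed

lemma edges_meet_left_open:
  assumes "x \<in> E j" "x \<in> E k" "x \<noteq> W j" "x \<noteq> W k"
  shows "j mod int n = k mod int n"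
  using edges_meet_at_vertex[OF assms(1,2)] assms(3,4) by (auto simp: mod_eq_dvd_iff dvd_eq_mod_eq_0)

lemma edges_meet_mixed:
  assumes "x \<in> E j" "x \<in> E k" "x \<noteq> W (j+1)" "x \<noteq> W k"
  shows "j mod int n = k mod int n \<or> j mod int n = (k + 1) mod int n"
proof (rule ccontr)
  assume ne: "\<not> ?thesis"
  then have "(j - k) mod int n \<noteq> 0" by (simp add: mod_eq_dvd_iff dvd_eq_mod_eq_0)
  with edges_meet_at_vertex[OF assms(1,2)] assms(4) have "(j - k) mod int n = 1"
    by auto
  then show False using ne n_ge5_int mod_succ_of_diff[of j k "int n"] by simp
qed

text \<open>Two points of the real axis on the boundary: seen from an edge through x, the point y lies
  weakly to the left, which fixes the sign of the vertical component of that edge.\<close>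
lemma axis_sign:
  assumes x: "x \<in> E i" "Im x = 0" and y: "y \<in> E j" "Im y = 0"
  shows "Im (d i) * (Re y - Re x) \<le> 0"
proof -
  have "cross (d i) (x - W i) = 0" using x(1) by (rule cross_on_edge)
  moreover have "cross (d i) (y - W i) \<ge> 0" using y(1) by (rule cross_edge_nonneg)
  ultimately show ?thesis using x(2) y(2) by (simp add: cross_expand algebra_simps)
qed

text \<open>S is not contained in the line through an edge: some full edge among the next ones lies
  strictly to its left.\<close>
lemma S_not_collinear:
  assumes "\<And>s. s \<in> S \<Longrightarrow> cross (d i) (s - W i) = 0" shows False
proof -
  have pos: "cross (d i) (W (i + j) - W i) > 0" if "2 \<le> j" "j \<le> 4" for j
  proof (rule cross_vertex(2))
    have "(i + j - i) mod int n = j" using that n_ge5_int by simp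
    then show "(i + j - i) mod int n \<noteq> 0" "(i + j - i) mod int n \<noteq> 1" using that by simp_all
  qed
  obtain a where a: "a = i + 2 \<or> a = i + 3" "card (S \<inter> E a) = 2"
  proof -
    have "i + 2 + 1 = i + 3" by simp
    then show ?thesis using full_edge_adjacent[of "i+2"] that by metis
  qed
  then obtain s where s: "s \<in> S" "s \<in> E a" using full_edge_nonempty by blast
  then obtain t where t: "0 \<le> t" "t \<le> 1" "s = W a + complex_of_real t * d a" by (auto simp: edge_param)
  have "cross (d i) (s - W i) = (1 - t) * cross (d i) (W a - W i) + t * cross (d i) (W (a+1) - W i)"
    unfolding t(3) by (rule cross_segment_point)
  moreover have "cross (d i) (W a - W i) > 0" "cross (d i) (W (a+1) - W i) > 0"
    using a(1) pos[of 2] pos[of 3] pos[of 4] by (auto simp: add.assoc)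
  ultimately have "cross (d i) (s - W i) > 0" using t
    by (smt (verit, best) mult_nonneg_nonneg mult_pos_pos)
  then show False using assms[OF s(1)] by simp
qed

text \<open>Counting argument showing that every point of S lies on the boundary of the polygon.  To each
  index j assign a point of S on a full edge next to vertex j: on [W j, W (j+1)) if edge j is
  full, otherwise on (W (j-1), W j], different from the point assigned to j - 1 (edge j - 1 is
  then full and has two points).  This assignment is injective, so it hits all n = card S points.\<close>
lemma pred_succ: "((j - 1) mod int n + 1) mod int n = j mod int n"
  by (simp add: mod_simps)

lemma pred_full:
  assumes "card (S \<inter> E j) \<noteq> 2" shows "card (S \<inter> E ((j - 1) mod int n)) = 2"
proof -
  have "W ((j - 1) mod int n) = W (j - 1)" "W ((j - 1) mod int n + 1) = W j"
    by (rule W_cong; simp add: mod_simps)+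
  then have eq: "E ((j - 1) mod int n) = closed_segment (W (j - 1)) (W j)" by (simp only:)
  have "card (S \<inter> closed_segment (W (j - 1)) (W j)) = 2"
    using full_edge_adjacent[of "j - 1"] assms by simp
  then show ?thesis unfolding eq .
qed

lemma vertex_points:
  obtains g where "\<And>j. g j \<in> S"
    and "\<And>j. card (S \<inter> E j) = 2 \<Longrightarrow> g j \<in> E j \<and> g j \<noteq> W (j+1)"
    and "\<And>j. card (S \<inter> E j) \<noteq> 2 \<Longrightarrow>
      g j \<in> E ((j - 1) mod int n) \<and> g j \<noteq> W ((j - 1) mod int n) \<and> g j \<noteq> g ((j - 1) mod int n)"
proof -
  have "\<forall>k. \<exists>a b. card (S \<inter> E k) = 2 \<longrightarrow>
      a \<in> S \<inter> E k \<and> b \<in> S \<inter> E k \<and> a \<noteq> b \<and> a \<noteq> W (k+1) \<and> b \<noteq> W k"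
    using full_edge_points by blast
  then obtain A B where AB: "\<And>k. card (S \<inter> E k) = 2 \<Longrightarrow>
      A k \<in> S \<inter> E k \<and> B k \<in> S \<inter> E k \<and> A k \<noteq> B k \<and> A k \<noteq> W (k+1) \<and> B k \<noteq> W k"
    by metis
  define g where "g j = (if card (S \<inter> E j) = 2 then A j else B ((j - 1) mod int n))" for j
  have on_full: "g j \<in> E j \<and> g j \<noteq> W (j+1)" if "card (S \<inter> E j) = 2" for j
    using AB[OF that] that by (simp add: g_def)
  have on_pred: "g j \<in> E ((j - 1) mod int n) \<and> g j \<noteq> W ((j - 1) mod int n) \<and> g j \<noteq> g ((j - 1) mod int n)"
    if nf: "card (S \<inter> E j) \<noteq> 2" for j
  proof -
    have pf: "card (S \<inter> E ((j - 1) mod int n)) = 2" by (rule pred_full[OF nf])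
    have "g j = B ((j - 1) mod int n)" "g ((j - 1) mod int n) = A ((j - 1) mod int n)"
      using nf pf by (simp_all add: g_def)
    then show ?thesis using AB[OF pf] by auto
  qed
  have in_S: "g j \<in> S" for j
    using AB pred_full unfolding g_def by (cases "card (S \<inter> E j) = 2") auto
  show thesis by (rule that[OF in_S on_full on_pred])
qed

lemma vertex_points_inj:
  assumes on_full: "\<And>j. card (S \<inter> E j) = 2 \<Longrightarrow> g j \<in> E j \<and> g j \<noteq> W (j+1)"
    and on_pred: "\<And>j. card (S \<inter> E j) \<noteq> 2 \<Longrightarrow>
      g j \<in> E ((j - 1) mod int n) \<and> g j \<noteq> W ((j - 1) mod int n) \<and> g j \<noteq> g ((j - 1) mod int n)"
  shows "inj_on g {0..<int n}"
proof -
  have same: "\<And>j1 j2. j1 \<in> {0..<int n} \<Longrightarrow> j2 \<in> {0..<int n} \<Longrightarrow> j1 mod int n = j2 mod int n \<Longrightarrow> j1 = j2"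
    by simp
  have pred_range: "(j - 1) mod int n \<in> {0..<int n}" for j using n_pos by simp
  have mixed: "g j1 \<noteq> g j2" if j: "j1 \<in> {0..<int n}" "j2 \<in> {0..<int n}"
    and F: "card (S \<inter> E j1) = 2" "card (S \<inter> E j2) \<noteq> 2" for j1 j2
  proof
    assume eq: "g j1 = g j2"
    let ?p = "(j2 - 1) mod int n"
    have a: "g j1 \<in> E j1" "g j1 \<noteq> W (j1+1)" using on_full[OF F(1)] by blast+
    have b: "g j2 \<in> E ?p" "g j2 \<noteq> W ?p" "g j2 \<noteq> g ?p" using on_pred[OF F(2)] by blast+
    have "j1 mod int n = ?p mod int n \<or> j1 mod int n = (?p + 1) mod int n"
      using edges_meet_mixed[OF a(1) b(1)[folded eq] a(2) b(2)[folded eq]] .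
    then show False
    proof
      assume "j1 mod int n = ?p mod int n"
      then have "j1 = ?p" using same[OF j(1) pred_range] by blast
      then show False using b(3) eq by simp
    next
      assume "j1 mod int n = (?p + 1) mod int n"
      then have "j1 = j2" using pred_succ same[OF j] by simp
      then show False using F by simp
    qed
  qed
  show ?thesis
  proof (rule inj_onI)
    fix j1 j2 assume j: "j1 \<in> {0..<int n}" "j2 \<in> {0..<int n}" and eq: "g j1 = g j2"
    consider "card (S \<inter> E j1) = 2" "card (S \<inter> E j2) = 2" | "card (S \<inter> E j1) \<noteq> 2" "card (S \<inter> E j2) \<noteq> 2"
      | "card (S \<inter> E j1) = 2" "card (S \<inter> E j2) \<noteq> 2" | "card (S \<inter> E j1) \<noteq> 2" "card (S \<inter> E j2) = 2"
      by blast
    then show "j1 = j2"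
    proof cases
      case 1
      have "g j1 \<in> E j1" "g j1 \<noteq> W (j1+1)" "g j2 \<in> E j2" "g j2 \<noteq> W (j2+1)"
        using on_full[OF 1(1)] on_full[OF 1(2)] by blast+
      then have "j1 mod int n = j2 mod int n" using edges_meet_right_open[of "g j1" j1 j2] eq by simp
      then show ?thesis by (rule same[OF j])
    next
      case 2
      have "g j1 \<in> E ((j1 - 1) mod int n)" "g j1 \<noteq> W ((j1 - 1) mod int n)"
        "g j2 \<in> E ((j2 - 1) mod int n)" "g j2 \<noteq> W ((j2 - 1) mod int n)"
        using on_pred[OF 2(1)] on_pred[OF 2(2)] by blast+
      then have "(j1 - 1) mod int n mod int n = (j2 - 1) mod int n mod int n"
        using edges_meet_left_open[of "g j1" "(j1 - 1) mod int n" "(j2 - 1) mod int n"] eq by simp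
      then have "(j1 - 1) mod int n + 1 = (j2 - 1) mod int n + 1" by simp
      then have "j1 mod int n = j2 mod int n" using pred_succ[of j1] pred_succ[of j2] by simp
      then show ?thesis by (rule same[OF j])
    next
      case 3 then show ?thesis using mixed[OF j 3] eq by simp
    next
      case 4 then show ?thesis using mixed[OF j(2,1) 4(2,1)] eq by simp
    qed
  qed
qed

lemma S_on_edges:
  assumes sS: "s \<in> S" shows "\<exists>k. s \<in> E k"
proof -
  obtain g where in_S: "\<And>j. g j \<in> S"
    and on_full: "\<And>j. card (S \<inter> E j) = 2 \<Longrightarrow> g j \<in> E j \<and> g j \<noteq> W (j+1)"
    and on_pred: "\<And>j. card (S \<inter> E j) \<noteq> 2 \<Longrightarrow>
      g j \<in> E ((j - 1) mod int n) \<and> g j \<noteq> W ((j - 1) mod int n) \<and> g j \<noteq> g ((j - 1) mod int n)"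
    using vertex_points by metis
  have "card (g ` {0..<int n}) = card S" using card_image[OF vertex_points_inj[OF on_full on_pred]] cardS by simp
  then have "g ` {0..<int n} = S" using card_subset_eq[OF finS] in_S by blast
  then obtain j where "s = g j" using sS by auto
  then show ?thesis using on_full on_pred by (cases "card (S \<inter> E j) = 2") blast+
qed

end

lemma prereg_affine:
  fixes \<alpha> \<beta> :: complex
  assumes P: "prereg n c \<rho> th S" and a: "\<alpha> \<noteq> 0"
  shows "prereg n (\<alpha> * c + \<beta>) (\<rho> * cmod \<alpha>) (th + Arg \<alpha>) ((\<lambda>x. \<alpha> * x + \<beta>) ` S)"
proof -
  interpret prereg n c \<rho> th S by (rule P)
  let ?f = "\<lambda>x. \<alpha> * x + \<beta>"
  have inj: "inj_on ?f A" for A using a by (auto simp: inj_on_def)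
  have Wf: "vtx n (\<alpha> * c + \<beta>) (\<rho> * cmod \<alpha>) (th + Arg \<alpha>) k = ?f (W k)" for k using vtx_affine[OF a] by simp
  have cE: "card (?f ` S \<inter> closed_segment (?f (W i)) (?f (W j))) = card (S \<inter> closed_segment (W i) (W j))" for i j
    unfolding affine_image_segment[OF a] using card_image[OF inj] by simp
  have oE: "?f ` S \<inter> open_segment (?f (W i)) (?f (W j)) = {} \<longleftrightarrow> S \<inter> open_segment (W i) (W j) = {}" for i j
    unfolding affine_image_segment[OF a] by simp
  show ?thesis
  proof (unfold_locales, goal_cases)
    case 1 show ?case by (rule n5)
  next
    case 2 show ?case using rho a by simp
  next
    case 3 show ?case using finS by simp
  next
    case 4 show ?case using card_image[OF inj] cardS by simp
  next
    case (5 k) show ?case unfolding Wf cE oE by (rule pair)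
  qed
qed

lemma prereg_of_pre_regular:
  assumes fin: "finite S" and c4: "card S > 4" and pr: "pre_regular S"
  obtains c r th where "prereg (card S) c r th S"
proof -
  define n where "n = card S"
  have n0: "n > 0" using c4 n_def by simp
  obtain c r th where rho: "r > 0" and pr: "\<forall>k < n. (card (S \<inter> reg_edge n c r th k) = 2 \<and> S \<inter> reg_edge_int n c r th (Suc k mod n) = {}) \<or>
          (card (S \<inter> reg_edge n c r th (Suc k mod n)) = 2 \<and> S \<inter> reg_edge_int n c r th k = {})"
    using pr unfolding pre_regular_def Let_def n_def by blast
  have "prereg n c r th S"
  proof (unfold_locales, goal_cases)
    case 1 show ?case using c4 n_def by simp
  next
    case 2 show ?case by (rule rho)
  next
    case 3 show ?case by (rule fin)
  next
    case 4 show ?case by (simp add: n_def)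
  next
    case (5 k)
    have "nat (k mod int n) < n" using n0 by (simp add: nat_less_iff)
    then have "(card (S \<inter> reg_edge n c r th (nat (k mod int n))) = 2 \<and>
               S \<inter> reg_edge_int n c r th (Suc (nat (k mod int n)) mod n) = {}) \<or>
          (card (S \<inter> reg_edge n c r th (Suc (nat (k mod int n)) mod n)) = 2 \<and>
               S \<inter> reg_edge_int n c r th (nat (k mod int n)) = {})"
      using pr by blast
    then show ?case unfolding reg_edge_mod[OF n0] by (simp add: add.assoc)
  qed
  then show thesis using that n_def by blast
qed

text \<open>Two cases are distinguished: some vertex of the polygon lies strictly above the real
  axis (then an edge crosses the axis and the turning of the edge directions contradicts the
  position of the points of S on the full edges), or all vertices lie weakly below it.\<close>
locale normal_config = prereg +
  assumes pS: "-(1/2) \<in> S" and qS: "1/2 \<in> S"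
    and ball: "\<And>s. s \<in> S \<Longrightarrow> cmod s \<le> 1/2" and low: "\<And>s. s \<in> S \<Longrightarrow> Im s \<le> 0"
begin

text \<open>The edges through -1/2 and 1/2 are oriented so that the other point lies to their left.\<close>
lemma orient_left: "y \<in> E k \<Longrightarrow> y = -(1/2) \<Longrightarrow> Im (d k) \<le> 0"
proof -
  assume y: "y \<in> E k" "y = -(1/2)"
  obtain j where "1/2 \<in> E j" using S_on_edges qS by blast
  then show ?thesis using axis_sign[of y k "1/2" j] y by simp
qed

lemma orient_right: "y \<in> E k \<Longrightarrow> y = 1/2 \<Longrightarrow> Im (d k) \<ge> 0"
proof -
  assume y: "y \<in> E k" "y = 1/2"
  obtain j where "-(1/2) \<in> E j" using S_on_edges pS by blast
  then show ?thesis using axis_sign[of y k "-(1/2)" j] y by simp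
qed

text \<open>If some vertex lies above the axis, no edge lies on the axis (all of S would be on it).\<close>
lemma horizontal_edge:
  assumes z: "z \<in> E i" "Im z = 0" and flat: "Im (d i) = 0" and m: "Im (W m) > 0"
  shows False
proof -
  obtain t where t: "z = W i + complex_of_real t * d i" using z by (auto simp: edge_param)
  have Wi: "Im (W i) = 0" using z(2) flat unfolding t by simp
  have crf: "cross (d i) (w - W i) = Re (d i) * Im w" for w using flat Wi by (simp add: cross_expand)
  have "cross (d i) (W m - W i) \<ge> 0" by (rule cross_vertex(1))
  then have "Re (d i) \<ge> 0" using m crf[of "W m"] by (simp add: zero_le_mult_iff)
  moreover have "Re (d i) \<noteq> 0" using edge_nonzero[of i] flat by (simp add: complex_eq_iff)
  ultimately have rp: "Re (d i) > 0" by simp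
  have "cross (d i) (s - W i) = 0" if sS: "s \<in> S" for s
  proof -
    obtain j where "s \<in> E j" using S_on_edges sS by blast
    then have "cross (d i) (s - W i) \<ge> 0" by (rule cross_edge_nonneg)
    then have "Im s \<ge> 0" using crf[of s] rp by (simp add: zero_le_mult_iff)
    then have "Im s = 0" using low[OF sS] by simp
    then show ?thesis using crf[of s] by simp
  qed
  then show False by (rule S_not_collinear)
qed

text \<open>When some vertex lies above the axis, an edge can cross the axis only at -1/2 or 1/2: any other
  crossing point would leave -1/2 or 1/2 strictly to the right of the edge.\<close>
lemma axis_crossing:
  assumes y: "y \<in> E k" "Im y = 0" and steep: "Im (d k) \<noteq> 0" and m: "Im (W m) > 0"
  shows "y = -(1/2) \<or> y = 1/2"
proof -
  obtain i1 where i1: "-(1/2) \<in> E i1" using S_on_edges pS by blast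
  obtain i2 where i2: "1/2 \<in> E i2" using S_on_edges qS by blast
  have h1: "Im (d i1) \<noteq> 0" and h2: "Im (d i2) \<noteq> 0"
    using horizontal_edge[OF i1 _ _ m] horizontal_edge[OF i2 _ _ m] by auto
  have l1: "Im (d i1) < 0" using orient_left[OF i1 refl] h1 by simp
  have r2: "Im (d i2) > 0" using orient_right[OF i2 refl] h2 by simp
  have s1: "Im (d i1) * (Re y + 1/2) \<le> 0" using axis_sign[OF i1 _ y] by simp
  have s2: "Im (d i2) * (Re y - 1/2) \<le> 0" using axis_sign[OF i2 _ y] by simp
  have s3: "Im (d k) * (- 1/2 - Re y) \<le> 0" "Im (d k) * (1/2 - Re y) \<le> 0"
    using axis_sign[OF y i1] axis_sign[OF y i2] by simp_all
  have "Re y \<ge> -(1/2)" using s1 l1 by (simp add: mult_le_0_iff)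
  moreover have "Re y \<le> 1/2" using s2 r2 by (simp add: mult_le_0_iff)
  moreover have "\<not> (-(1/2) < Re y \<and> Re y < 1/2)" using s3 steep by (auto simp: mult_le_0_iff)
  ultimately have "Re y = -(1/2) \<or> Re y = 1/2" by linarith
  then show ?thesis using y(2) by (auto simp: complex_eq_iff)
qed

lemma upper_edge_empty: "Im (W k) > 0 \<Longrightarrow> Im (W (k+1)) > 0 \<Longrightarrow> S \<inter> E k = {}"
proof (rule ccontr)
  assume h: "Im (W k) > 0" "Im (W (k+1)) > 0" "S \<inter> E k \<noteq> {}"
  then obtain s where s: "s \<in> S" "s \<in> E k" by blast
  then obtain t where t: "0 \<le> t" "t \<le> 1" "s = W k + complex_of_real t * d k" by (auto simp: edge_param)
  have "Im s = (1 - t) * Im (W k) + t * Im (W (k+1))" unfolding t(3) by (simp add: algebra_simps)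
  moreover have "(1 - t) * Im (W k) + t * Im (W (k+1)) > 0"
  proof (cases "t = 0")
    case True then show ?thesis using h by simp
  next
    case False
    then have "t * Im (W (k+1)) > 0" using t h by simp
    moreover have "(1 - t) * Im (W k) \<ge> 0" using t h by simp
    ultimately show ?thesis by linarith
  qed
  ultimately show False using low[OF s(1)] by simp
qed

lemma edge_rot: "d (j + t) = cis (2*pi*real_of_int t/real n) * d j"
  using vtx_edge_rotate[of n c \<rho> th j t] by (simp add: add.assoc)

lemma small_angle: "t = 1 \<or> t = 2 \<Longrightarrow> 0 < 2*pi*real_of_int t/real n \<and> 2*pi*real_of_int t/real n < pi"
proof -
  assume t: "t = 1 \<or> t = 2"
  have n: "real n \<ge> 5" using n5 by simp
  have "2*pi*real_of_int t < pi * real n" using t n pi_gt_zero by auto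
  then show ?thesis using t n pi_gt_zero by (auto simp: field_simps)
qed

text \<open>The edge direction turns counterclockwise by 2 pi t / n < pi from edge k to edge k + t
  (t = 1, 2), so it cannot pass from the closed first to the closed fourth quadrant.\<close>
lemma no_turn_below:
  assumes t: "t = 1 \<or> t = 2" and dk: "Re (d k) > 0" "Im (d k) \<ge> 0"
    and dkt: "Re (d (k+t)) > 0" "Im (d (k+t)) \<le> 0"
  shows False
  using rotate_upper_right[of "2*pi*real_of_int t/real n" "d k"] small_angle[OF t] edge_rot[of k t] dk dkt
  by auto

lemma not_full_if_single: "S \<inter> E k \<subseteq> {x} \<Longrightarrow> card (S \<inter> E k) \<noteq> 2"
  using card_mono[of "{x}" "S \<inter> E k"] by auto

lemma upward_crossing_point:
  assumes j0: "Im (W j) \<le> 0" and j1: "Im (W (j+1)) > 0"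
  obtains \<tau> where "0 \<le> \<tau>" "\<tau> < 1" "W j + complex_of_real \<tau> * d j = 1/2"
proof -
  have dj: "Im (d j) > 0" using j0 j1 by simp
  define \<tau> where "\<tau> = - Im (W j) / Im (d j)"
  have \<tau>0: "\<tau> \<ge> 0" using j0 dj by (simp add: \<tau>_def divide_nonpos_pos)
  have \<tau>1: "\<tau> < 1"
  proof -
    have "- Im (W j) < Im (d j)" using j1 by simp
    then show ?thesis unfolding \<tau>_def using dj by (metis divide_less_eq_1_pos)
  qed
  have \<tau>e: "\<tau> * Im (d j) = - Im (W j)" using dj by (simp add: \<tau>_def)
  define y where "y = W j + complex_of_real \<tau> * d j"
  have yE: "y \<in> E j" unfolding y_def edge_param using \<tau>0 \<tau>1 by auto
  have yIm: "Im y = 0" unfolding y_def using \<tau>e by simp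
  have "y = -(1/2) \<or> y = 1/2" using axis_crossing[OF yE yIm _ j1] dj by simp
  moreover have "y \<noteq> -(1/2)" using orient_left[OF yE] dj by force
  ultimately show thesis using that \<tau>0 \<tau>1 unfolding y_def by blast
qed

lemma downward_crossing_point:
  assumes j0: "Im (W j) > 0" and j1: "Im (W (j+1)) \<le> 0"
  obtains \<tau> where "0 < \<tau>" "\<tau> \<le> 1" "W j + complex_of_real \<tau> * d j = -(1/2)"
proof -
  have dj: "Im (d j) < 0" using j0 j1 by simp
  define \<tau> where "\<tau> = - Im (W j) / Im (d j)"
  have \<tau>0: "\<tau> > 0" using j0 dj by (simp add: \<tau>_def divide_pos_neg)
  have \<tau>1: "\<tau> \<le> 1"
  proof -
    have "Im (d j) \<le> - Im (W j)" using j1 by simp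
    then show ?thesis unfolding \<tau>_def using dj by (metis divide_le_eq_1_neg)
  qed
  have \<tau>e: "\<tau> * Im (d j) = - Im (W j)" using dj by (simp add: \<tau>_def)
  define y where "y = W j + complex_of_real \<tau> * d j"
  have yE: "y \<in> E j" unfolding y_def edge_param using \<tau>0 \<tau>1 by (intro exI[of _ \<tau>]) auto
  have yIm: "Im y = 0" unfolding y_def using \<tau>e by simp
  have "y = -(1/2) \<or> y = 1/2" using axis_crossing[OF yE yIm _ j0] dj by simp
  moreover have "y \<noteq> 1/2" using orient_right[OF yE] dj by force
  ultimately show thesis using that \<tau>0 \<tau>1 unfolding y_def by blast
qed

text \<open>Crossing upwards through 1/2 in the interior of edge j: then edge j is full, its other point
  lies before 1/2 and below the axis, so by Thales edge j points to the right; a later edge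
  j + t pointing into the lower right quadrant is then impossible.\<close>
lemma upward_crossing_interior:
  assumes t: "t = 1 \<or> t = 2" and dj: "Im (d j) > 0" and \<tau>: "0 < \<tau>" "\<tau> < 1"
    and y: "W j + complex_of_real \<tau> * d j = 1/2"
    and dm: "Re (d (j+t)) > 0" "Im (d (j+t)) < 0"
  shows False
proof -
  have \<tau>e: "Im (W j) + \<tau> * Im (d j) = 0" using arg_cong[OF y, of Im] by simp
  have "W j \<noteq> W (j+1)" using edge_nonzero[of j] by auto
  then have "1/2 \<in> I j" unfolding open_segment_param using \<tau> y by auto
  then have "S \<inter> I j \<noteq> {}" using qS by auto
  then have "card (S \<inter> E j) = 2" using pair[of "j-1"] by simp
  then obtain b where b: "b \<in> S" "b \<in> E j" "b \<noteq> 1/2" using full_edge_other by blast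
  then obtain \<sigma> where \<sigma>: "0 \<le> \<sigma>" "\<sigma> \<le> 1" "b = W j + complex_of_real \<sigma> * d j" by (auto simp: edge_param)
  have "Im (W j) + \<sigma> * Im (d j) \<le> 0" using low[OF b(1)] \<sigma>(3) by simp
  then have "\<sigma> * Im (d j) \<le> \<tau> * Im (d j)" using \<tau>e by linarith
  then have "\<sigma> \<le> \<tau>" using dj by simp
  moreover have "\<sigma> \<noteq> \<tau>" using b(3) \<sigma>(3) y by auto
  ultimately have st: "\<tau> - \<sigma> > 0" by simp
  have "b = 1/2 - complex_of_real (\<tau> - \<sigma>) * d j" unfolding \<sigma>(3) y[symmetric] of_real_diff by algebra
  then have "Re (d j) > 0" using thales_right[OF _ st edge_nonzero[of j]] ball[OF b(1)] by simp
  then show False using no_turn_below[OF t, of j] dj dm by simp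
qed

text \<open>Crossing upwards at the vertex W j = 1/2: edge j has no other point of S, so edges j - 1 and
  j + 1 are full and edge j + 1 must be the one pointing into the lower right quadrant; the other
  point on edge j - 1 shows by Thales that edge j - 1 points into the upper right quadrant.\<close>
lemma upward_crossing_vertex:
  assumes t: "t = 1 \<or> t = 2" and dj: "Im (d j) > 0" and Wj: "W j = 1/2"
    and j2: "t = 2 \<Longrightarrow> Im (W (j+2)) > 0" and dm: "Re (d (j+t)) > 0" "Im (d (j+t)) < 0"
  shows False
proof -
  have ImWj: "Im (W j) = 0" using arg_cong[OF Wj, of Im] by simp
  have sub: "S \<inter> E j \<subseteq> {W j}"
  proof
    fix s assume s: "s \<in> S \<inter> E j"
    then obtain \<sigma> where \<sigma>: "0 \<le> \<sigma>" "\<sigma> \<le> 1" "s = W j + complex_of_real \<sigma> * d j" by (auto simp: edge_param)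
    have "\<sigma> * Im (d j) \<le> 0" using low[of s] s \<sigma>(3) ImWj by simp
    then have "\<sigma> = 0" using \<sigma>(1) dj by (simp add: mult_le_0_iff)
    then show "s \<in> {W j}" using \<sigma>(3) by simp
  qed
  then have c1: "card (S \<inter> E j) \<noteq> 2" by (rule not_full_if_single)
  have "card (S \<inter> E (j+1)) = 2" using pair[of j] c1 by auto
  then obtain s where "s \<in> S" "s \<in> E (j+1)" using full_edge_nonempty by blast
  moreover have "Im (W (j+1)) > 0" using dj Wj by simp
  ultimately have t1: "t = 1" using upper_edge_empty[of "j+1"] j2 t by (auto simp: add.assoc)
  have "card (S \<inter> closed_segment (W (j-1)) (W j)) = 2" using pair[of "j-1"] c1 by auto
  then have "card (S \<inter> E (j-1)) = 2" by simp
  then obtain b where b: "b \<in> S" "b \<in> E (j-1)" "b \<noteq> W j" using full_edge_other by blast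
  then obtain \<sigma> where \<sigma>: "0 \<le> \<sigma>" "\<sigma> \<le> 1" "b = W (j-1) + complex_of_real \<sigma> * d (j-1)"
    by (auto simp: closed_segment_param)
  have "\<sigma> \<noteq> 1" using b(3) \<sigma>(3) by auto
  then have s1: "1 - \<sigma> > 0" using \<sigma>(2) by simp
  have bb: "b = W j - complex_of_real (1 - \<sigma>) * d (j-1)" unfolding \<sigma>(3) of_real_diff by simp algebra
  then have "b = 1/2 - complex_of_real (1 - \<sigma>) * d (j-1)" using Wj by simp
  then have re: "Re (d (j-1)) > 0" using thales_right[OF _ s1 edge_nonzero[of "j-1"]] ball[OF b(1)] by simp
  have "Im (W j) - (1 - \<sigma>) * Im (d (j-1)) \<le> 0" using low[OF b(1)] bb by simp
  then have "(1 - \<sigma>) * Im (d (j-1)) \<ge> 0" using ImWj by simp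
  then have im: "Im (d (j-1)) \<ge> 0" using s1 by (simp add: zero_le_mult_iff)
  have "Re (d (j-1+2)) > 0" "Im (d (j-1+2)) \<le> 0" using dm t1 by (simp_all add: algebra_simps)
  then show False using no_turn_below[of 2 "j-1"] re im by simp
qed

lemma upward_crossing:
  assumes t: "t = 1 \<or> t = 2" and j0: "Im (W j) \<le> 0" and j1: "Im (W (j+1)) > 0"
    and j2: "t = 2 \<Longrightarrow> Im (W (j+2)) > 0" and dm: "Re (d (j+t)) > 0" "Im (d (j+t)) < 0"
  shows False
proof -
  have dj: "Im (d j) > 0" using j0 j1 by simp
  obtain \<tau> where \<tau>: "0 \<le> \<tau>" "\<tau> < 1" and y: "W j + complex_of_real \<tau> * d j = 1/2"
    using upward_crossing_point[OF j0 j1] .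
  show False
  proof (cases "\<tau> = 0")
    case True
    then show False using upward_crossing_vertex[OF t dj _ j2 dm] y by simp
  next
    case False
    then show False using upward_crossing_interior[OF t dj _ \<tau>(2) y dm] \<tau>(1) by simp
  qed
qed

lemma downward_crossing_interior:
  assumes t: "t = 1 \<or> t = 2" and dk: "Re (d k) > 0" "Im (d k) > 0" and dj: "Im (d (k+t)) < 0"
    and \<tau>: "0 < \<tau>" "\<tau> < 1" and y: "W (k+t) + complex_of_real \<tau> * d (k+t) = -(1/2)"
  shows False
proof -
  define j where "j = k + t"
  have dj: "Im (d j) < 0" and y: "W j + complex_of_real \<tau> * d j = -(1/2)" using dj y by (simp_all add: j_def)
  have \<tau>e: "Im (W j) + \<tau> * Im (d j) = 0" using arg_cong[OF y, of Im] by simp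
  have "W j \<noteq> W (j+1)" using edge_nonzero[of j] by auto
  then have "-(1/2) \<in> I j" unfolding open_segment_param using \<tau> y by auto
  then have "S \<inter> I j \<noteq> {}" using pS by auto
  then have "card (S \<inter> E j) = 2" using pair[of j] by auto
  then obtain b where b: "b \<in> S" "b \<in> E j" "b \<noteq> -(1/2)" using full_edge_other by blast
  then obtain \<sigma> where \<sigma>: "0 \<le> \<sigma>" "\<sigma> \<le> 1" "b = W j + complex_of_real \<sigma> * d j" by (auto simp: edge_param)
  have "Im (W j) + \<sigma> * Im (d j) \<le> 0" using low[OF b(1)] \<sigma>(3) by simp
  then have "\<sigma> * Im (d j) \<le> \<tau> * Im (d j)" using \<tau>e by linarith
  then have "\<tau> \<le> \<sigma>" using dj by (simp add: mult_le_cancel_right)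
  moreover have "\<sigma> \<noteq> \<tau>" using b(3) \<sigma>(3) y by auto
  ultimately have st: "\<sigma> - \<tau> > 0" by simp
  have "b = -(1/2) + complex_of_real (\<sigma> - \<tau>) * d j" unfolding \<sigma>(3) y[symmetric] of_real_diff by algebra
  then have "Re (d j) > 0" using thales_left[OF _ st edge_nonzero[of j]] ball[OF b(1)] by simp
  then show False using no_turn_below[OF t, of k] dk dj unfolding j_def by simp
qed

lemma downward_crossing_vertex:
  assumes t: "t = 1 \<or> t = 2" and dk: "Re (d k) > 0" "Im (d k) > 0" and dj: "Im (d (k+t)) < 0"
    and Wj: "W (k+t+1) = -(1/2)" and j2: "t = 2 \<Longrightarrow> Im (W (k+1)) > 0"
  shows False
proof -
  define j where "j = k + t"
  have dj: "Im (d j) < 0" and Wj: "W (j+1) = -(1/2)" using dj Wj by (simp_all add: j_def)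
  have sub: "S \<inter> E j \<subseteq> {W (j+1)}"
  proof
    fix s assume s: "s \<in> S \<inter> E j"
    then obtain \<sigma> where \<sigma>: "0 \<le> \<sigma>" "\<sigma> \<le> 1" "s = W j + complex_of_real \<sigma> * d j"
      by (auto simp: edge_param)
    have "Im s = Im (W (j+1)) - (1 - \<sigma>) * Im (d j)" unfolding \<sigma>(3) by (simp add: algebra_simps)
    then have "- ((1 - \<sigma>) * Im (d j)) \<le> 0" using low[of s] s Wj by simp
    then have "(1 - \<sigma>) * Im (d j) \<ge> 0" by simp
    then have "1 - \<sigma> \<le> 0" using dj by (simp add: zero_le_mult_iff)
    then have "\<sigma> = 1" using \<sigma>(2) by simp
    then show "s \<in> {W (j+1)}" using \<sigma>(3) by simp
  qed
  then have c1: "card (S \<inter> E j) \<noteq> 2" by (rule not_full_if_single)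
  have "card (S \<inter> closed_segment (W (j-1)) (W j)) = 2" using pair[of "j-1"] c1 by auto
  then obtain s where s: "s \<in> S" "s \<in> closed_segment (W (j-1)) (W j)" by (metis full_edge_nonempty diff_add_cancel)
  have "Im (W j) > 0" using dj Wj by simp
  then have t1: "t = 1" using upper_edge_empty[of "k+1"] j2 s t by (auto simp: j_def ac_simps)
  have "card (S \<inter> E (j+1)) = 2" using pair[of j] c1 by auto
  then obtain b where b: "b \<in> S" "b \<in> E (j+1)" "b \<noteq> W (j+1)" using full_edge_other by blast
  then obtain \<sigma> where \<sigma>: "0 \<le> \<sigma>" "\<sigma> \<le> 1" "b = W (j+1) + complex_of_real \<sigma> * d (j+1)"
    by (auto simp: closed_segment_param)
  have s0: "\<sigma> > 0" using b(3) \<sigma>(1,3) by (cases "\<sigma> = 0") auto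
  have "b = -(1/2) + complex_of_real \<sigma> * d (j+1)" using \<sigma>(3) Wj by simp
  then have re: "Re (d (j+1)) > 0" using thales_left[OF _ s0 edge_nonzero[of "j+1"]] ball[OF b(1)] by simp
  have "Im (W (j+1)) + \<sigma> * Im (d (j+1)) \<le> 0" using low[OF b(1)] \<sigma>(3) by simp
  then have im: "Im (d (j+1)) \<le> 0" using s0 Wj by (simp add: mult_le_0_iff)
  show False using no_turn_below[of 2 k] dk re im t1 unfolding j_def by (simp add: ac_simps)
qed

lemma downward_crossing:
  assumes t: "t = 1 \<or> t = 2" and j0: "Im (W (k+t)) > 0" and j1: "Im (W (k+t+1)) \<le> 0"
    and j2: "t = 2 \<Longrightarrow> Im (W (k+1)) > 0" and dk: "Re (d k) > 0" "Im (d k) > 0"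
  shows False
proof -
  have dj: "Im (d (k+t)) < 0" using j0 j1 by simp
  obtain \<tau> where \<tau>: "0 < \<tau>" "\<tau> \<le> 1" and y: "W (k+t) + complex_of_real \<tau> * d (k+t) = -(1/2)"
    using downward_crossing_point[OF j0 j1] .
  show False
  proof (cases "\<tau> = 1")
    case True
    then show False using downward_crossing_vertex[OF t dk dj _ j2] y by simp
  next
    case False
    then show False using downward_crossing_interior[OF t dk dj \<tau>(1) _ y] \<tau>(2) by simp
  qed
qed

text \<open>A full edge m starting above the axis goes down across the axis through -1/2, before both of
  its points of S; by Thales it points into the lower right quadrant.\<close>
lemma full_edge_leaving_upper_direction:
  assumes m: "Im (W m) > 0" and ab: "0 \<le> \<alpha>" "\<alpha> < \<beta>" "\<beta> \<le> 1"
    and aS: "W m + complex_of_real \<alpha> * d m \<in> S" and bS: "W m + complex_of_real \<beta> * d m \<in> S"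
  shows "Re (d m) > 0 \<and> Im (d m) < 0"
proof -
  have ia: "Im (W m) + \<alpha> * Im (d m) \<le> 0" using low[OF aS] by simp
  have ib: "Im (W m) + \<beta> * Im (d m) \<le> 0" using low[OF bS] by simp
  have dm: "Im (d m) < 0"
  proof (rule ccontr)
    assume "\<not> Im (d m) < 0"
    then have "\<alpha> * Im (d m) \<ge> 0" using ab by simp
    then show False using ia m by simp
  qed
  have "Im (d m) \<le> \<beta> * Im (d m)" using dm ab by (simp add: mult_le_cancel_right1)
  then have "Im (W (m+1)) \<le> 0" using ib by simp
  then obtain \<tau> where "0 < \<tau>" and y: "W m + complex_of_real \<tau> * d m = -(1/2)"
    using downward_crossing_point[OF m] by blast
  have "\<tau> * Im (d m) = - Im (W m)" using arg_cong[OF y, of Im] by simp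
  then have "\<alpha> * Im (d m) \<le> \<tau> * Im (d m)" using ia by linarith
  then have "\<tau> \<le> \<alpha>" using dm by (simp add: mult_le_cancel_right)
  then have bt: "\<beta> - \<tau> > 0" using ab by simp
  have "W m + complex_of_real \<beta> * d m = -(1/2) + complex_of_real (\<beta> - \<tau>) * d m"
    unfolding y[symmetric] of_real_diff by algebra
  then have "Re (d m) > 0" using thales_left[OF _ bt edge_nonzero[of m]] ball[OF bS] by simp
  with dm show ?thesis by simp
qed

text \<open>Symmetrically, a full edge k ending above the axis crosses it upwards through 1/2, after
  both of its points of S, and points into the upper right quadrant.\<close>
lemma full_edge_entering_upper_direction:
  assumes m: "Im (W (k+1)) > 0" and ab: "0 \<le> \<alpha>" "\<alpha> < \<beta>" "\<beta> \<le> 1"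
    and aS: "W k + complex_of_real \<alpha> * d k \<in> S" and bS: "W k + complex_of_real \<beta> * d k \<in> S"
  shows "Re (d k) > 0 \<and> Im (d k) > 0"
proof -
  have ia: "Im (W k) + \<alpha> * Im (d k) \<le> 0" using low[OF aS] by simp
  have ib: "Im (W k) + \<beta> * Im (d k) \<le> 0" using low[OF bS] by simp
  have m': "Im (W k) + Im (d k) > 0" using m by simp
  have dk: "Im (d k) > 0"
  proof (rule ccontr)
    assume "\<not> Im (d k) > 0"
    then have "\<beta> * Im (d k) \<ge> Im (d k)" using ab
      by (metis mult_right_mono_neg mult_1 not_less)
    then show False using ib m' by simp
  qed
  have "Im (W k) \<le> 0" using ia ab dk by (smt (verit) mult_nonneg_nonneg)
  then obtain \<tau> where "\<tau> < 1" and y: "W k + complex_of_real \<tau> * d k = 1/2"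
    using upward_crossing_point[OF _ m] by blast
  have "\<tau> * Im (d k) = - Im (W k)" using arg_cong[OF y, of Im] by simp
  then have "\<beta> * Im (d k) \<le> \<tau> * Im (d k)" using ib by linarith
  then have "\<beta> \<le> \<tau>" using dk by (simp add: mult_le_cancel_right)
  then have at: "\<tau> - \<alpha> > 0" using ab by simp
  have "W k + complex_of_real \<alpha> * d k = 1/2 - complex_of_real (\<tau> - \<alpha>) * d k"
    unfolding y[symmetric] of_real_diff by algebra
  then have "Re (d k) > 0" using thales_right[OF _ at edge_nonzero[of k]] ball[OF aS] by simp
  with dk show ?thesis by simp
qed

text \<open>An edge m starting above the axis cannot point into the lower right quadrant: one of the two
  previous edges would cross the axis upwards (if both started above, they would carry no point of
  S, contradicting Pre-regularity).\<close>
lemma full_edge_leaving_upper: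
  assumes m: "Im (W m) > 0" and dm: "Re (d m) > 0" "Im (d m) < 0"
  shows False
proof (cases "Im (W (m-1)) \<le> 0")
  case True
  show False using upward_crossing[of 1 "m-1"] True m dm by simp
next
  case F1: False
  show False
  proof (cases "Im (W (m-2)) \<le> 0")
    case True
    have e: "m - 2 + 1 = m - 1" "m - 2 + 2 = m" by simp_all
    show False using upward_crossing[of 2 "m-2"] True F1 m dm unfolding e by simp
  next
    case False
    have "S \<inter> E (m-2) = {}" using upper_edge_empty[of "m-2"] False F1 by simp
    moreover have "S \<inter> E (m-1) = {}" using upper_edge_empty[of "m-1"] F1 m by simp
    ultimately show False using full_edge_adjacent[of "m-2"] by simp
  qed
qed

lemma full_edge_entering_upper:
  assumes m: "Im (W (k+1)) > 0" and dk: "Re (d k) > 0" "Im (d k) > 0"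
  shows False
proof (cases "Im (W (k+2)) \<le> 0")
  case True
  show False using downward_crossing[of 1 k] True m dk by (simp add: ac_simps)
next
  case F1: False
  show False
  proof (cases "Im (W (k+3)) \<le> 0")
    case True
    have e: "k + 2 + 1 = k + 3" by simp
    show False using downward_crossing[of 2 k] True F1 m dk unfolding e by (simp add: ac_simps)
  next
    case False
    have "S \<inter> E (k+1) = {}" using upper_edge_empty[of "k+1"] F1 m by (simp add: ac_simps)
    moreover have "S \<inter> E (k+2) = {}" using upper_edge_empty[of "k+2"] F1 False by (simp add: ac_simps)
    ultimately show False using full_edge_adjacent[of "k+1"] by (simp add: ac_simps)
  qed
qed

lemma full_edge_params:
  assumes "card (S \<inter> E k) = 2"
  shows "\<exists>\<alpha> \<beta>. 0 \<le> \<alpha> \<and> \<alpha> < \<beta> \<and> \<beta> \<le> 1 \<and> W k + complex_of_real \<alpha> * d k \<in> S \<and> W k + complex_of_real \<beta> * d k \<in> S"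
proof -
  obtain x z where xz: "x \<noteq> z" "S \<inter> E k = {x, z}" using assms by (auto simp: card_2_iff)
  then have "x \<in> S" "x \<in> E k" "z \<in> S" "z \<in> E k" by auto
  then obtain a b where a: "0 \<le> a" "a \<le> 1" "x = W k + complex_of_real a * d k"
    and b: "0 \<le> b" "b \<le> 1" "z = W k + complex_of_real b * d k" by (auto simp: edge_param)
  have "a \<noteq> b" using xz(1) a(3) b(3) by auto
  then show ?thesis
  proof (cases "a < b")
    case True then show ?thesis using a b \<open>x \<in> S\<close> \<open>z \<in> S\<close> by blast
  next
    case False then have "b < a" using \<open>a \<noteq> b\<close> by simp
    then show ?thesis using a b \<open>x \<in> S\<close> \<open>z \<in> S\<close> by blast
  qed
qed

text \<open>First case refuted: no vertex lies strictly above the axis (one of the two edges at such a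
  vertex is full).\<close>
lemma no_vertex_above: "Im (W m) > 0 \<Longrightarrow> False"
proof -
  assume m: "Im (W m) > 0"
  have "card (S \<inter> E (m-1)) = 2 \<or> card (S \<inter> E m) = 2" using full_edge_adjacent[of "m-1"] by simp
  then show False
  proof
    assume "card (S \<inter> E (m-1)) = 2"
    then obtain \<alpha> \<beta> where "0 \<le> \<alpha>" "\<alpha> < \<beta>" "\<beta> \<le> 1" "W (m-1) + complex_of_real \<alpha> * d (m-1) \<in> S"
      "W (m-1) + complex_of_real \<beta> * d (m-1) \<in> S" using full_edge_params by blast
    then show False using full_edge_entering_upper_direction[of "m-1" \<alpha> \<beta>] full_edge_entering_upper[of "m-1"] m
      by simp
  next
    assume "card (S \<inter> E m) = 2"
    then obtain \<alpha> \<beta> where "0 \<le> \<alpha>" "\<alpha> < \<beta>" "\<beta> \<le> 1" "W m + complex_of_real \<alpha> * d m \<in> S"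
      "W m + complex_of_real \<beta> * d m \<in> S" using full_edge_params by blast
    then show False using full_edge_leaving_upper_direction[of m \<alpha> \<beta>] full_edge_leaving_upper[of m] m
      by simp
  qed
qed

end

text \<open>Second case: all vertices lie weakly below the axis.  Then the diameter from -1/2 to 1/2 lies
  on an edge k on the axis, traversed from right to left; the edge k - 1 turns down by 2 pi / n
  and edge k - 2 by 4 pi / n, which forces the points of S on edge k - 1 or k - 2 outside the
  disk.\<close>
locale low_config = normal_config +
  assumes all: "\<And>k. Im (W k) \<le> 0"
begin

lemma axis_point_cases:
  assumes "y \<in> S" "Im y = 0"
  shows "(\<exists>a. y = W a) \<or> (\<exists>i. Im (W i) = 0 \<and> Im (W (i+1)) = 0)"
proof -
  obtain i where "y \<in> E i" using S_on_edges assms(1) by blast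
  then obtain t where t: "0 \<le> t" "t \<le> 1" "y = W i + complex_of_real t * d i" by (auto simp: edge_param)
  have A: "Im (W i) \<le> 0" "Im (W (i+1)) \<le> 0" using all by auto
  have e: "(1 - t) * Im (W i) + t * Im (W (i+1)) = 0" using assms(2) t(3) by (simp add: algebra_simps)
  show ?thesis
  proof (cases "t = 0")
    case True then show ?thesis using t(3) by auto
  next
    case F1: False
    show ?thesis
    proof (cases "t = 1")
      case True then show ?thesis using t(3) by (auto intro!: exI[of _ "i+1"])
    next
      case False
      then have "0 < t" "t < 1" using F1 t by auto
      then have "(1 - t) * Im (W i) \<le> 0" "t * Im (W (i+1)) \<le> 0" using A
        by (simp_all add: mult_nonneg_nonpos)
      then have "(1 - t) * Im (W i) = 0" "t * Im (W (i+1)) = 0" using e by linarith+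
      then have "Im (W i) = 0 \<and> Im (W (i+1)) = 0" using \<open>0 < t\<close> \<open>t < 1\<close> by simp
      then show ?thesis by blast
    qed
  qed
qed

lemma axis_edge_contains:
  assumes "Im (W i) = 0" "Im (W (i+1)) = 0"
  shows "-(1/2) \<in> E i" "1/2 \<in> E i"
proof -
  have crz: "cross (d i) (y - W i) = 0" if "Im y = 0" for y using assms that by (simp add: cross_expand)
  obtain j1 where "-(1/2) \<in> E j1" using S_on_edges pS by blast
  then show "-(1/2) \<in> E i" using line_point_on_edge crz[of "-(1/2)"] by simp
  obtain j2 where "1/2 \<in> E j2" using S_on_edges qS by blast
  then show "1/2 \<in> E i" using line_point_on_edge crz[of "1/2"] by simp
qed

text \<open>If -1/2 and 1/2 are both vertices, then 1/2 is the vertex right before -1/2: otherwise the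
  vertex before -1/2 would lie strictly to the left of the chord from -1/2 to 1/2, i.e. above the
  axis.\<close>
lemma axis_vertices_adjacent:
  assumes a: "W a = -(1/2)" and b: "W b = 1/2"
  shows "W (a - 1) = 1/2"
proof -
  define s where "s = (b - a) mod int n"
  have s0: "0 \<le> s" "s < int n" using n_pos by (simp_all add: s_def)
  have Wb: "W b = W (a + s)" by (rule W_cong) (simp add: s_def mod_add_right_eq)
  have "s \<noteq> 0"
  proof
    assume "s = 0" then have "W b = W a" using Wb by simp
    then show False using a b by (simp add: complex_eq_iff)
  qed
  have Wl: "W (a + (int n - 1)) = W (a - 1)"
  proof (rule W_cong)
    have "a + (int n - 1) = (a - 1) + int n" by simp
    then show "(a + (int n - 1)) mod int n = (a - 1) mod int n" by (simp only: mod_add_self2)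
  qed
  have "cross (W (a+s) - W a) (W (a + (int n - 1)) - W a) = Im (W (a - 1))"
    unfolding Wb[symmetric] a b Wl by (simp add: cross_expand)
  then have le: "4*\<rho>^2 * sin (pi*real_of_int s/real n) * sin (pi*real_of_int ((int n - 1) - s)/real n) * sin (pi*real_of_int (int n - 1)/real n) \<le> 0"
    using cross_vertices[of n c \<rho> th a s "int n - 1"] all[of "a-1"] by simp
  have "s = int n - 1"
  proof (rule ccontr)
    assume "s \<noteq> int n - 1"
    then have "s < int n - 1" using s0 by simp
    then have "sin (pi*real_of_int s/real n) > 0" "sin (pi*real_of_int ((int n - 1) - s)/real n) > 0"
      "sin (pi*real_of_int (int n - 1)/real n) > 0"
      using \<open>s \<noteq> 0\<close> s0 n_ge5_int sin_pi_frac_pos[of s] sin_pi_frac_pos[of "int n - 1 - s"] sin_pi_frac_pos[of "int n - 1"]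
      by auto
    moreover have "4*\<rho>^2 > 0" using rho by simp
    ultimately have "4*\<rho>^2 * sin (pi*real_of_int s/real n) * sin (pi*real_of_int ((int n - 1) - s)/real n) * sin (pi*real_of_int (int n - 1)/real n) > 0"
      by (intro mult_pos_pos) auto
    then show False using le by simp
  qed
  then show ?thesis using Wb Wl b by simp
qed

lemma axis_edge_exists: "\<exists>k. -(1/2) \<in> E k \<and> 1/2 \<in> E k \<and> Im (W k) = 0 \<and> Im (W (k+1)) = 0"
proof (cases "\<exists>i. Im (W i) = 0 \<and> Im (W (i+1)) = 0")
  case True then show ?thesis using axis_edge_contains by blast
next
  case False
  have "(\<exists>a. -(1/2) = W a) \<or> (\<exists>i. Im (W i) = 0 \<and> Im (W (i+1)) = 0)"
    by (rule axis_point_cases[OF pS]) simp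
  moreover have "(\<exists>b. 1/2 = W b) \<or> (\<exists>i. Im (W i) = 0 \<and> Im (W (i+1)) = 0)"
    by (rule axis_point_cases[OF qS]) simp
  ultimately obtain a b where a: "W a = -(1/2)" and b: "W b = 1/2" using False by metis
  have e: "W (a - 1) = 1/2" "W (a - 1 + 1) = -(1/2)" using axis_vertices_adjacent[OF a b] a by simp_all
  have "-(1/2) \<in> E (a-1)" "1/2 \<in> E (a-1)" unfolding e by simp_all
  moreover have "Im (W (a-1)) = 0" "Im (W (a-1+1)) = 0" unfolding e by simp_all
  ultimately show ?thesis by blast
qed

lemma axis_edge_shape:
  assumes pk: "-(1/2) \<in> E k" and qk: "1/2 \<in> E k" and i0: "Im (W k) = 0" and i1: "Im (W (k+1)) = 0"
  obtains lm \<mu> where "lm > 0" "d k = complex_of_real (-lm)" "W k = complex_of_real \<mu>" "1/2 \<le> \<mu>" "\<mu> < lm"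
proof -
  have idk: "Im (d k) = 0" using i0 i1 by simp
  have "cross (d k) (W (k+2) - W k) > 0" by (rule cross_vertex(2)) (use n_ge5_int in auto)
  then have "Re (d k) * Im (W (k+2)) > 0" using i0 idk by (simp add: cross_expand)
  then have rdk: "Re (d k) < 0" using all[of "k+2"] by (simp add: zero_less_mult_iff)
  define lm where "lm = - Re (d k)"
  define \<mu> where "\<mu> = Re (W k)"
  have lam: "lm > 0" using rdk by (simp add: lm_def)
  have dk: "d k = complex_of_real (-lm)" using idk by (simp add: lm_def complex_eq_iff)
  have Wk: "W k = complex_of_real \<mu>" using i0 by (simp add: \<mu>_def complex_eq_iff)
  obtain t1 where t1: "0 \<le> t1" "t1 \<le> 1" "1/2 = W k + complex_of_real t1 * d k" using qk by (auto simp: edge_param)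
  obtain t2 where t2: "0 \<le> t2" "t2 \<le> 1" "-(1/2) = W k + complex_of_real t2 * d k" using pk by (auto simp: edge_param)
  have h1: "1/2 = W k + complex_of_real t1 * complex_of_real (-lm)" using t1(3) by (simp only: dk)
  have "1/2 = \<mu> - t1 * lm" using arg_cong[OF h1, of Re] by (simp add: \<mu>_def)
  moreover have "t1 * lm \<ge> 0" using t1 lam by simp
  ultimately have mu: "\<mu> \<ge> 1/2" by linarith
  have h2: "-(1/2) = W k + complex_of_real t2 * complex_of_real (-lm)" using t2(3) by (simp only: dk)
  have "-(1/2) = \<mu> - t2 * lm" using arg_cong[OF h2, of Re] by (simp add: \<mu>_def)
  moreover have "t2 * lm \<le> lm" using t2 lam by (simp add: mult_left_le_one_le)
  ultimately have ml: "\<mu> < lm" by linarith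
  show thesis using that lam dk Wk mu ml by blast
qed

lemma turn_angle_acute: "cos (2*pi/real n) > 0"
proof (rule cos_gt_zero)
  have n: "real n \<ge> 5" using n5 by simp
  then show "2*pi/real n < pi/2" using pi_gt_zero by (simp add: field_simps)
  show "2*pi/real n > 0" using pi_gt_zero n_pos by simp
qed

lemma edge_back: "d (k - t) = cis (- (2*pi*real_of_int t/real n)) * d k"
  using edge_rot[of "k - t" t] by (simp add: cis_mult)

text \<open>Points of edge k - 1 other than its end W k lie outside the disk: that edge leaves the point
  \<mu> \<ge> 1/2 of the axis at the acute exterior angle 2 pi / n.\<close>
lemma edge_before_axis_edge_outside:
  assumes lam: "lm > 0" and dk: "d k = complex_of_real (-lm)" and Wk: "W k = complex_of_real \<mu>"
    and mu: "1/2 \<le> \<mu>" and s: "s \<in> E (k-1)" "s \<noteq> W k"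
  shows "cmod s > 1/2"
proof -
  define \<alpha> where "\<alpha> = 2*pi/real n"
  have ca: "cos \<alpha> > 0" unfolding \<alpha>_def by (rule turn_angle_acute)
  have sc: "sin \<alpha> ^ 2 + cos \<alpha> ^ 2 = 1" by simp
  have dk1: "d (k-1) = cis (-\<alpha>) * d k" using edge_back[of k 1] unfolding \<alpha>_def by simp
  obtain \<sigma> where \<sigma>: "0 \<le> \<sigma>" "\<sigma> \<le> 1" "s = W (k-1) + complex_of_real \<sigma> * d (k-1)"
    using s(1) by (auto simp: closed_segment_param)
  define \<kappa> where "\<kappa> = 1 - \<sigma>"
  have sk: "s = W k - complex_of_real \<kappa> * d (k-1)" unfolding \<sigma>(3) \<kappa>_def of_real_diff by (simp add: algebra_simps)
  have "\<kappa> \<noteq> 0"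
  proof
    assume "\<kappa> = 0"
    then have "s = W k" using sk by simp
    then show False using s(2) by contradiction
  qed
  then have k0: "\<kappa> > 0" using \<sigma>(2) by (simp add: \<kappa>_def)
  have res: "Re s = \<mu> + \<kappa> * lm * cos \<alpha>" "Im s = - (\<kappa> * lm * sin \<alpha>)"
    unfolding sk dk1 unfolding dk unfolding Wk by (simp_all add: cis.sel)
  have "(cmod s)^2 = (\<mu> + \<kappa> * lm * cos \<alpha>)^2 + (\<kappa> * lm * sin \<alpha>)^2" by (simp add: cmod_power2 res)
  also have "\<dots> = \<mu>^2 + 2 * \<mu> * \<kappa> * lm * cos \<alpha> + (\<kappa> * lm)^2" using sc by algebra
  finally have cs: "(cmod s)^2 = \<mu>^2 + 2 * \<mu> * \<kappa> * lm * cos \<alpha> + (\<kappa> * lm)^2" .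
  have "2 * \<mu> * \<kappa> * lm * cos \<alpha> \<ge> 0" using mu k0 lam ca by simp
  moreover have "(\<kappa> * lm)^2 > 0" using k0 lam by simp
  ultimately have "(cmod s)^2 > \<mu>^2" using cs by linarith
  moreover have "\<mu>^2 \<ge> (1/2)^2" using mu by (intro power_mono) auto
  ultimately have "(1/2)^2 < (cmod s)^2" by linarith
  then show ?thesis by (rule power_less_imp_less_base) simp
qed

text \<open>All points of edge k - 2 lie outside the disk: it starts at distance > \<mu> and turns by 4 pi / n,
  still not enough to come back within distance \<mu> as long as the edge on the axis is longer
  than \<mu>.\<close>
lemma edge_two_before_axis_edge_outside:
  assumes lam: "lm > 0" and dk: "d k = complex_of_real (-lm)" and Wk: "W k = complex_of_real \<mu>"
    and mu: "1/2 \<le> \<mu>" and ml: "\<mu> < lm" and s: "s \<in> E (k-2)"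
  shows "cmod s > 1/2"
proof -
  define \<alpha> where "\<alpha> = 2*pi/real n"
  have ca: "cos \<alpha> > 0" unfolding \<alpha>_def by (rule turn_angle_acute)
  have sc: "sin \<alpha> ^ 2 + cos \<alpha> ^ 2 = 1" by simp
  have dk1: "d (k-1) = cis (-\<alpha>) * d k" using edge_back[of k 1] unfolding \<alpha>_def by simp
  have dk2: "d (k-2) = cis (-(2*\<alpha>)) * d k" using edge_back[of k 2] unfolding \<alpha>_def by simp
  obtain \<sigma> where \<sigma>: "0 \<le> \<sigma>" "\<sigma> \<le> 1" "s = W (k-2) + complex_of_real \<sigma> * d (k-2)"
    using s by (auto simp: closed_segment_param)
  define \<kappa> where "\<kappa> = 1 - \<sigma>"
  have k01: "0 \<le> \<kappa>" "\<kappa> \<le> 1" using \<sigma> by (simp_all add: \<kappa>_def)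
  have sk: "s = W k - d (k-1) - complex_of_real \<kappa> * d (k-2)"
    unfolding \<sigma>(3) \<kappa>_def of_real_diff by (simp add: algebra_simps)
  have res: "Re s = \<mu> + lm * cos \<alpha> + \<kappa> * lm * cos (2*\<alpha>)" "Im s = - (lm * sin \<alpha> + \<kappa> * lm * sin (2*\<alpha>))"
    unfolding sk dk1 dk2 unfolding dk unfolding Wk by (simp_all add: cis.sel algebra_simps)
  have c2: "cos (2*\<alpha>) = 2 * cos \<alpha> ^ 2 - 1" by (simp add: cos_double_cos)
  have s2: "sin (2*\<alpha>) = 2 * sin \<alpha> * cos \<alpha>" by (rule sin_double)
  have "(cmod s)^2 = (\<mu> + lm * cos \<alpha> + \<kappa> * lm * cos (2*\<alpha>))^2 + (lm * sin \<alpha> + \<kappa> * lm * sin (2*\<alpha>))^2"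
    unfolding cmod_power2 res by (simp only: power2_minus)
  also have "\<dots> = \<mu>^2 + (2*\<mu>*lm*cos \<alpha> + 4*\<mu>*lm*\<kappa>*(cos \<alpha>)^2 + lm^2*((1-\<kappa>)^2 + 2*\<kappa>*cos \<alpha>) + 2*lm*\<kappa>*(lm - \<mu>))"
    unfolding c2 s2 using sc by algebra
  finally have cs: "(cmod s)^2 = \<mu>^2 + (2*\<mu>*lm*cos \<alpha> + 4*\<mu>*lm*\<kappa>*(cos \<alpha>)^2 + lm^2*((1-\<kappa>)^2 + 2*\<kappa>*cos \<alpha>) + 2*lm*\<kappa>*(lm - \<mu>))" .
  have "2*\<mu>*lm*cos \<alpha> > 0" using mu lam ca by simp
  moreover have "4*\<mu>*lm*\<kappa>*(cos \<alpha>)^2 \<ge> 0" using mu lam k01 by simp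
  moreover have "lm^2*((1-\<kappa>)^2 + 2*\<kappa>*cos \<alpha>) \<ge> 0" using k01 ca by simp
  moreover have "2*lm*\<kappa>*(lm - \<mu>) \<ge> 0" using lam k01 ml by simp
  ultimately have "(cmod s)^2 > \<mu>^2" using cs by linarith
  moreover have "\<mu>^2 \<ge> (1/2)^2" using mu by (intro power_mono) auto
  ultimately have "(1/2)^2 < (cmod s)^2" by linarith
  then show ?thesis by (rule power_less_imp_less_base) simp
qed

lemma low_config_false: False
proof -
  obtain k where axis: "-(1/2) \<in> E k" "1/2 \<in> E k" "Im (W k) = 0" "Im (W (k+1)) = 0"
    using axis_edge_exists by blast
  obtain lm \<mu> where shape: "lm > 0" "d k = complex_of_real (-lm)" "W k = complex_of_real \<mu>" "1/2 \<le> \<mu>" "\<mu> < lm"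
    using axis_edge_shape[OF axis] .
  have "S \<inter> E (k-1) \<subseteq> {W k}"
  proof
    fix s assume s: "s \<in> S \<inter> E (k-1)"
    show "s \<in> {W k}"
    proof (rule ccontr)
      assume "s \<notin> {W k}"
      then have "cmod s > 1/2" using edge_before_axis_edge_outside[OF shape(1-4)] s by simp
      then show False using ball[of s] s by simp
    qed
  qed
  then have "card (S \<inter> E (k-1)) \<noteq> 2" by (rule not_full_if_single)
  then have "card (S \<inter> E (k-2)) = 2" using full_edge_adjacent[of "k-2"] by simp
  then obtain s where s: "s \<in> S" "s \<in> E (k-2)" using full_edge_nonempty by blast
  show False using edge_two_before_axis_edge_outside[OF shape s(2)] ball[OF s(1)] by simp
qed

end

lemma (in normal_config) normal_config_false: False
proof (cases "\<exists>m. Im (W m) > 0")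
  case True then show ?thesis using no_vertex_above by blast
next
  case False
  then have "\<And>k. Im (W k) \<le> 0" by (meson not_less)
  then interpret low_config n c \<rho> th S by unfold_locales simp
  show False by (rule low_config_false)
qed

theorem theorem5p4:
  fixes S :: "complex set" and z0 :: complex and r :: real
  assumes "finite S" and "card S > 4"
    and "is_SED S z0 r"
    and "z0 \<notin> S"
    and "pre_regular S"
  shows "\<not> half_disk S z0"
proof
  assume hd: "half_disk S z0"
  have ne: "S \<noteq> {}" using assms(2) by auto
  obtain c \<rho> th where P: "prereg (card S) c \<rho> th S"
    using prereg_of_pre_regular[OF assms(1,2,5)] .
  obtain \<alpha> \<beta> :: complex where \<alpha>: "\<alpha> \<noteq> 0"
    and ends: "-(1/2) \<in> (\<lambda>x. \<alpha> * x + \<beta>) ` S" "1/2 \<in> (\<lambda>x. \<alpha> * x + \<beta>) ` S"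
    and ball: "\<And>s. s \<in> S \<Longrightarrow> cmod (\<alpha> * s + \<beta>) \<le> 1/2"
    and low: "\<And>s. s \<in> S \<Longrightarrow> Im (\<alpha> * s + \<beta>) \<le> 0"
    using half_disk_normal_form[OF assms(1) ne assms(3,4) hd] by metis
  have "prereg (card S) (\<alpha> * c + \<beta>) (\<rho> * cmod \<alpha>) (th + Arg \<alpha>) ((\<lambda>x. \<alpha> * x + \<beta>) ` S)"
    by (rule prereg_affine[OF P \<alpha>])
  then interpret normal_config "card S" "\<alpha> * c + \<beta>" "\<rho> * cmod \<alpha>" "th + Arg \<alpha>" "(\<lambda>x. \<alpha> * x + \<beta>) ` S"
    by (rule normal_config.intro) (unfold_locales, use ends ball low in auto)
  show False by (rule normal_config_false)
qed

end
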